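(* Let $\Omega\subset\mathbb{R}^d$ be compact, $T,N\in\mathbb{N}$, let $F_{\tilde\xi_{t,n}}:\mathbb{R}^d\to\mathbb{R}^{d'}$ be affine maps and $\tilde\theta_{t,n}$ unmasked attention parameters with $d_{\mathrm{in}}(\tilde\theta_{t,n})=d'$, $d_{\mathrm{head}}(\tilde\theta_{t,n})=k(\tilde\theta_{t,n})=1$, $H(\tilde\theta_{t,n})=d'$, and let $G(\mu,x)=\sum_{n=1}^N(\Gamma_{\tilde\theta_{1,n}}\diamond F_{\tilde\xi_{1,n}})(\mu,x)\odot\cdots\odot(\Gamma_{\tilde\theta_{T,n}}\diamond F_{\tilde\xi_{T,n}})(\mu,x)$. Then for every $\varepsilon>0$ there exist $L$, unmasked attention parameters $\theta_1,\dots,\theta_L$ and MLPs $F_{\xi_1},\dots,F_{\xi_L}$ such that $$\forall(\mu,x)\in\mathcal{P}(\Omega)\times\Omega,\quad|G(\mu,x)-F_{\xi_L}\diamond\Gamma_{\theta_L}\diamond\cdots\diamond F_{\xi_1}\diamond\Gamma_{\theta_1}(\mu,x)|\le\varepsilon,$$ with $d_{\mathrm{in}}(\theta_\ell)\le d+3d'$, $d_{\mathrm{head}}(\theta_\ell)=k(\theta_\ell)=1$, $H(\theta_\ell)\le d'$.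
   Context: $\odot$ is componentwise multiplication. Unmasked attention: for $\theta=(W^h,K^h,Q^h,V^h)_{h=1}^H$ with $K^h,Q^h\in\mathbb{R}^{k\times d_{\mathrm{in}}}$, $V^h\in\mathbb{R}^{d_{\mathrm{head}}\times d_{\mathrm{in}}}$, $W^h\in\mathbb{R}^{d_{\mathrm{in}}\times d_{\mathrm{head}}}$ (sizes $d_{\mathrm{in}}(\theta),d_{\mathrm{head}}(\theta),k(\theta),H(\theta)$), $\Gamma_\theta(\mu,x)=x+\sum_{h=1}^HW^h\int\frac{\exp(\frac1{\sqrt k}\langle Q^hx,K^hy\rangle)}{\int\exp(\frac1{\sqrt k}\langle Q^hx,K^hz\rangle)d\mu(z)}V^hy\,d\mu(y)$. An MLP is $A_K\circ\rho\circ\cdots\circ\rho\circ A_1$ with affine $A_j$ and componentwise ReLU $\rho$ (affine maps allowed), context-free: $F(\mu,x)=F(x)$. Composition: $(\Gamma_2\diamond\Gamma_1)(\mu,x)=\Gamma_2(\Gamma_1(\mu)_\sharp\mu,\Gamma_1(\mu,x))$ with $\Gamma_1(\mu)=\Gamma_1(\mu,\cdot)$. Dimensions compatible: $d_{\mathrm{in}}(\theta_1)=d$, $F_{\xi_\ell}:\mathbb{R}^{d_{\mathrm{in}}(\theta_\ell)}\to\mathbb{R}^{d_{\mathrm{in}}(\theta_{\ell+1})}$, $F_{\xi_L}$ maps into $\mathbb{R}^{d'}$. *)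

theory Defs
  imports "HOL-Probability.Probability"
begin

text \<open>Vectors of R^n are represented as functions nat => real, only the
  coordinates i < n being relevant (all constructions below return 0 outside).\<close>

type_synonym vec = "nat \<Rightarrow> real"

text \<open>Indexing: W h i j (i < d_in, j < d_head),
  V h j l (j < d_head, l < d_in), Q h a j and K h a j (a < k, j < d_in).\<close>
record attn_param =
  a_din :: nat
  a_dhead :: nat
  a_k :: nat
  a_H :: nat
  a_W :: "nat \<Rightarrow> nat \<Rightarrow> nat \<Rightarrow> real"
  a_K :: "nat \<Rightarrow> nat \<Rightarrow> nat \<Rightarrow> real"
  a_Q :: "nat \<Rightarrow> nat \<Rightarrow> nat \<Rightarrow> real"
  a_V :: "nat \<Rightarrow> nat \<Rightarrow> nat \<Rightarrow> real"

definition att_score :: "attn_param \<Rightarrow> nat \<Rightarrow> vec \<Rightarrow> vec \<Rightarrow> real" where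
  "att_score \<theta> h x y = (1 / sqrt (real (a_k \<theta>))) *
     (\<Sum>a<a_k \<theta>. (\<Sum>j<a_din \<theta>. a_Q \<theta> h a j * x j) * (\<Sum>j<a_din \<theta>. a_K \<theta> h a j * y j))"

definition Gamma :: "attn_param \<Rightarrow> vec measure \<Rightarrow> vec \<Rightarrow> vec" where
  "Gamma \<theta> \<mu> x = (\<lambda>i. if i < a_din \<theta> then
      x i + (\<Sum>h<a_H \<theta>. \<Sum>j<a_dhead \<theta>. a_W \<theta> h i j *
         (\<integral>y. (exp (att_score \<theta> h x y) / (\<integral>z. exp (att_score \<theta> h x z) \<partial>\<mu>))
                 * (\<Sum>l<a_din \<theta>. a_V \<theta> h j l * y l) \<partial>\<mu>))
    else 0)"

record affmap =
  af_in :: nat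
  af_out :: nat
  af_A :: "nat \<Rightarrow> nat \<Rightarrow> real"
  af_b :: "nat \<Rightarrow> real"

definition aff_eval :: "affmap \<Rightarrow> vec \<Rightarrow> vec" where
  "aff_eval f x = (\<lambda>i. if i < af_out f then (\<Sum>j<af_in f. af_A f i j * x j) + af_b f i else 0)"

definition relu :: "vec \<Rightarrow> vec" where
  "relu v = (\<lambda>i. max 0 (v i))"

text \<open>An MLP A_K o rho o ... o rho o A_1 is given by the list [A_1,...,A_K].\<close>
fun mlp_eval :: "affmap list \<Rightarrow> vec \<Rightarrow> vec" where
  "mlp_eval [] x = x"
| "mlp_eval [a] x = aff_eval a x"
| "mlp_eval (a # b # as) x = mlp_eval (b # as) (relu (aff_eval a x))"

definition mlp_wf :: "affmap list \<Rightarrow> bool" where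
  "mlp_wf \<xi> \<longleftrightarrow> \<xi> \<noteq> [] \<and> (\<forall>i. Suc i < length \<xi> \<longrightarrow> af_out (\<xi> ! i) = af_in (\<xi> ! Suc i))"

definition mlp_in :: "affmap list \<Rightarrow> nat" where
  "mlp_in \<xi> = af_in (hd \<xi>)"

definition mlp_out :: "affmap list \<Rightarrow> nat" where
  "mlp_out \<xi> = af_out (last \<xi>)"

definition ctx_comp :: "(vec measure \<Rightarrow> vec \<Rightarrow> vec) \<Rightarrow> (vec measure \<Rightarrow> vec \<Rightarrow> vec)
                        \<Rightarrow> vec measure \<Rightarrow> vec \<Rightarrow> vec" where
  "ctx_comp G2 G1 \<mu> x = G2 (distr \<mu> borel (G1 \<mu>)) (G1 \<mu> x)"

text \<open>The network F_{xi_L} <> Gamma_{theta_L} <> ... <> F_{xi_1} <> Gamma_{theta_1},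
  given by the list [(theta_1,xi_1),...,(theta_L,xi_L)]; MLPs are context-free.\<close>
fun tnet :: "(attn_param \<times> affmap list) list \<Rightarrow> vec measure \<Rightarrow> vec \<Rightarrow> vec" where
  "tnet [] = (\<lambda>\<mu> x. x)"
| "tnet ((\<theta>, \<xi>) # ps) = ctx_comp (tnet ps) (ctx_comp (\<lambda>\<mu>. mlp_eval \<xi>) (Gamma \<theta>))"

definition dims_compatible :: "nat \<Rightarrow> nat \<Rightarrow> (attn_param \<times> affmap list) list \<Rightarrow> bool" where
  "dims_compatible d d' ps \<longleftrightarrow> ps \<noteq> [] \<and> a_din (fst (hd ps)) = d \<and>
     (\<forall>l < length ps. mlp_wf (snd (ps ! l)) \<and> mlp_in (snd (ps ! l)) = a_din (fst (ps ! l)) \<and>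
        mlp_out (snd (ps ! l)) = (if Suc l < length ps then a_din (fst (ps ! Suc l)) else d'))"

definition prob_measures_on :: "vec set \<Rightarrow> vec measure set" where
  "prob_measures_on \<Omega> = {\<mu>. prob_space \<mu> \<and> sets \<mu> = sets borel \<and> emeasure \<mu> \<Omega> = 1}"

definition vnorm :: "nat \<Rightarrow> vec \<Rightarrow> real" where
  "vnorm n v = sqrt (\<Sum>i<n. (v i)\<^sup>2)"

end

theory Submission
  imports Defs
begin

text \<open>The network keeps a residual stream holding the input x, a partial sum over n, a
  running product over t and the current affine factor F_{t,n} x. Its attention layers,
  one per pair (t,n), are the given ones acting on the factor block only, so they turn the
  factor into Gamma_{t,n}(F_{t,n}(mu), F_{t,n} x) exactly and leave the other blocks
  untouched. The MLPs multiply this into the running product, and at the end of each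
  product add it to the partial sum. Multiplication is realised on bounded ranges by
  ReLU networks through a b = ((a+b)^2 - (a-b)^2)/4 with the square replaced by its
  piecewise linear interpolant on a fine grid, whose error is at most h^2/4 for mesh h.
  All factors are bounded uniformly in mu because Omega is compact and a softmax average
  stays within the range of the averaged values, so the per-multiplication errors add up
  to at most N T B^T delta.\<close>

section \<open>Measurability\<close>

lemma prob_measures_onD:
  assumes "\<mu> \<in> prob_measures_on \<Omega>"
  shows "prob_space \<mu>" "sets \<mu> = sets borel" "AE z in \<mu>. z \<in> \<Omega>"
  using assms prob_space.AE_prob_1 unfolding prob_measures_on_def by (force simp: measure_def)+

lemma measurable_snd_coordinate:
  assumes "sets \<nu> = sets (borel :: vec measure)"
  shows "(\<lambda>p::'a\<times>vec. snd p j) \<in> borel_measurable (M \<Otimes>\<^sub>M \<nu>)"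
proof -
  have "(\<lambda>y::vec. y j) \<in> borel_measurable \<nu>"
    unfolding measurable_cong_sets[OF assms refl] by (rule measurable_product_coordinates)
  then show ?thesis by (rule measurable_compose[OF measurable_snd])
qed

lemma measurable_fst_coordinate: "(\<lambda>p::vec\<times>'a. fst p j) \<in> borel_measurable (borel \<Otimes>\<^sub>M \<nu>)"
  by (rule measurable_compose[OF measurable_fst measurable_product_coordinates])

lemma borel_measurable_exp_compose:
  "f \<in> borel_measurable M \<Longrightarrow> (\<lambda>x. exp (f x :: real)) \<in> borel_measurable M"
  by (rule measurable_compose[OF _ borel_measurable_exp])

lemma borel_measurable_att_score: "att_score \<theta> h x \<in> borel_measurable borel"
  unfolding att_score_def
  by (intro borel_measurable_times borel_measurable_sum borel_measurable_const measurable_product_coordinates)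

lemma borel_measurable_att_score_pair:
  assumes "sets \<nu> = sets (borel :: vec measure)"
  shows "(\<lambda>p::vec\<times>vec. att_score \<theta> h (fst p) (snd p)) \<in> borel_measurable (borel \<Otimes>\<^sub>M \<nu>)"
  unfolding att_score_def
  by (intro borel_measurable_times borel_measurable_sum borel_measurable_const
        measurable_snd_coordinate[OF assms] measurable_fst_coordinate)

lemma borel_measurable_Gamma:
  assumes "finite_measure \<nu>" and sets: "sets \<nu> = sets (borel :: vec measure)"
  shows "Gamma \<theta> \<nu> \<in> borel_measurable borel"
proof (rule measurable_coordinatewise_then_product)
  fix i
  interpret finite_measure \<nu> by fact
  have Z: "(\<lambda>w. \<integral>z. exp (att_score \<theta> h w z) \<partial>\<nu>) \<in> borel_measurable borel" for h
    by (rule borel_measurable_lebesgue_integral)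
       (simp add: case_prod_beta' borel_measurable_exp_compose borel_measurable_att_score_pair[OF sets])
  have I: "(\<lambda>w. \<integral>y. (exp (att_score \<theta> h w y) / (\<integral>z. exp (att_score \<theta> h w z) \<partial>\<nu>))
                 * (\<Sum>l<a_din \<theta>. a_V \<theta> h j l * y l) \<partial>\<nu>) \<in> borel_measurable borel" for h j
    by (rule borel_measurable_lebesgue_integral)
      (unfold case_prod_beta', intro borel_measurable_times borel_measurable_divide
         borel_measurable_exp_compose borel_measurable_att_score_pair[OF sets]
         measurable_compose[OF measurable_fst Z] borel_measurable_sum borel_measurable_const
         measurable_snd_coordinate[OF sets])
  show "(\<lambda>x. Gamma \<theta> \<nu> x i) \<in> borel_measurable borel"
  proof (cases "i < a_din \<theta>")
    case True
    show ?thesis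
      unfolding Gamma_def if_P[OF True]
      by (intro borel_measurable_add borel_measurable_sum borel_measurable_times
          borel_measurable_const I measurable_product_coordinates)
  qed (simp add: Gamma_def)
qed

lemma borel_measurable_aff_eval: "aff_eval f \<in> borel_measurable borel"
  by (rule measurable_coordinatewise_then_product) (simp add: aff_eval_def)

lemma borel_measurable_relu: "relu \<in> borel_measurable borel"
  by (rule measurable_coordinatewise_then_product)
     (simp add: relu_def borel_measurable_max measurable_product_coordinates)

lemma borel_measurable_mlp_eval: "mlp_eval \<xi> \<in> borel_measurable borel"
proof (induction \<xi> rule: induct_list012)
  case (3 a b as)
  have "mlp_eval (a # b # as) = mlp_eval (b # as) \<circ> (relu \<circ> aff_eval a)" by (rule ext) simp
  then show ?case
    by (metis measurable_comp[OF measurable_comp[OF borel_measurable_aff_eval borel_measurable_relu] 3(2)])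
qed (simp_all add: borel_measurable_aff_eval)

lemma borel_measurable_mlp_Gamma:
  assumes "finite_measure \<nu>" "sets \<nu> = sets (borel :: vec measure)"
  shows "(\<lambda>y. mlp_eval \<xi> (Gamma \<theta> \<nu> y)) \<in> borel_measurable borel"
  using measurable_comp[OF borel_measurable_Gamma[OF assms] borel_measurable_mlp_eval]
  by (simp add: comp_def)

lemma measurable_borel_pushforward:
  assumes "prob_space \<mu>" "sets \<mu> = sets (borel :: vec measure)" "s \<in> borel_measurable borel"
  shows "s \<in> measurable \<mu> borel" "finite_measure (distr \<mu> borel s)"
proof -
  show sm: "s \<in> measurable \<mu> borel" using assms(3) by (simp add: measurable_cong_sets[OF assms(2) refl])
  show "finite_measure (distr \<mu> borel s)"
    using prob_space.prob_space_distr[OF assms(1) sm] by (simp add: prob_space_def)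
qed

lemma borel_measurable_layer:
  assumes "prob_space \<mu>" "sets \<mu> = sets (borel :: vec measure)" "s \<in> borel_measurable borel"
  shows "(\<lambda>z. mlp_eval \<xi> (Gamma \<theta> (distr \<mu> borel s) (s z))) \<in> borel_measurable borel"
  using measurable_compose[OF assms(3)
      borel_measurable_mlp_Gamma[OF measurable_borel_pushforward(2)[OF assms] sets_distr]] .

text \<open>The network as a function of the original input: every layer sees as context
  the pushforward of the original measure under the current feature map s.\<close>
fun feature_map :: "(attn_param \<times> affmap list) list \<Rightarrow> vec measure \<Rightarrow> (vec \<Rightarrow> vec) \<Rightarrow> vec \<Rightarrow> vec" where
  "feature_map [] \<mu> s = s"
| "feature_map ((\<theta>, \<xi>) # ps) \<mu> s = feature_map ps \<mu> (\<lambda>z. mlp_eval \<xi> (Gamma \<theta> (distr \<mu> borel s) (s z)))"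

lemma tnet_distr_eq_feature_map:
  assumes "prob_space \<mu>" "sets \<mu> = sets (borel :: vec measure)" "s \<in> borel_measurable borel"
  shows "tnet ps (distr \<mu> borel s) (s x) = feature_map ps \<mu> s x"
  using assms(3)
proof (induction ps arbitrary: s)
  case (Cons p ps)
  obtain \<theta> \<xi> where p: "p = (\<theta>, \<xi>)" by fastforce
  define L where "L = (\<lambda>y. mlp_eval \<xi> (Gamma \<theta> (distr \<mu> borel s) y))"
  note facts = measurable_borel_pushforward[OF assms(1,2) Cons.prems]
  have L: "L \<in> borel_measurable borel"
    unfolding L_def by (rule borel_measurable_mlp_Gamma[OF facts(2) sets_distr])
  have "ctx_comp (\<lambda>\<mu>. mlp_eval \<xi>) (Gamma \<theta>) (distr \<mu> borel s) = L"
    by (rule ext) (simp add: ctx_comp_def L_def)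
  then have "tnet (p # ps) (distr \<mu> borel s) (s x) = tnet ps (distr (distr \<mu> borel s) borel L) (L (s x))"
    unfolding p by (simp add: ctx_comp_def)
  also have "distr (distr \<mu> borel s) borel L = distr \<mu> borel (L \<circ> s)"
    by (rule distr_distr[OF L facts(1)])
  also have "tnet ps (distr \<mu> borel (L \<circ> s)) (L (s x)) = feature_map ps \<mu> (L \<circ> s) x"
    using Cons.IH[of "L \<circ> s"] measurable_comp[OF Cons.prems L] by (simp add: comp_def)
  finally show ?case unfolding p L_def by (simp add: comp_def)
qed simp

lemma tnet_eq_feature_map:
  assumes "prob_space \<mu>" "sets \<mu> = sets (borel :: vec measure)"
  shows "tnet ps \<mu> x = feature_map ps \<mu> (\<lambda>x. x) x"
proof -
  have "distr \<mu> borel (\<lambda>x. x) = \<mu>" by (rule distr_id2) (simp add: assms(2))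
  then show ?thesis using tnet_distr_eq_feature_map[OF assms, of "\<lambda>x. x" ps x] by simp
qed

section \<open>Two-layer ReLU networks computing products\<close>

lemma sum_lessThan_pairs:
  fixes g :: "nat \<Rightarrow> 'a::comm_monoid_add"
  shows "(\<Sum>j<2*n. g j) = (\<Sum>l<n. g (2*l) + g (2*l+1))"
  by (induction n) (simp_all add: algebra_simps)

lemma sum_lessThan_add:
  fixes g :: "nat \<Rightarrow> 'a::comm_monoid_add"
  shows "(\<Sum>j<a+b. g j) = (\<Sum>j<a. g j) + (\<Sum>j<b. g (a+j))"
  by (induction b) (simp_all add: algebra_simps)

lemma sum_lessThan_blocks:
  fixes g :: "nat \<Rightarrow> 'a::comm_monoid_add"
  shows "(\<Sum>q<m*K. g q) = (\<Sum>i<m. \<Sum>k<K. g (i*K+k))"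
  by (induction m) (simp_all add: add.commute[of K] sum_lessThan_add)

lemma sum_indicator_mult:
  fixes w :: "nat \<Rightarrow> real"
  shows "l < n \<Longrightarrow> (\<Sum>j<n. (if j = l then c else 0) * w j) = c * w l"
  by (simp add: if_distrib[of "\<lambda>x. x * _"] sum.delta cong: if_cong)

lemma sum_indicator_conj_mult:
  fixes g :: "nat \<Rightarrow> real"
  shows "i0 < n \<Longrightarrow> (\<Sum>i<n. (if i = i0 \<and> P then 1 else 0) * g i) = (if P then g i0 else 0)"
  using sum_indicator_mult[of i0 n 1 g] by (cases P) simp_all

lemma sum_lessThan_add_low:
  fixes w :: "nat \<Rightarrow> real"
  shows "(\<Sum>l<d+e. (if l < d then a l else 0) * w l) = (\<Sum>l<d. a l * w l)"
  unfolding sum_lessThan_add by simp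

definition relu_prod :: "nat \<Rightarrow> (nat \<Rightarrow> real) \<Rightarrow> (nat \<Rightarrow> real) \<Rightarrow> real \<Rightarrow> real \<Rightarrow> real" where
  "relu_prod K u c a b = (\<Sum>k<K. c k * (max 0 (a + b - u k) - max 0 (a - b - u k)))"

text \<open>The hidden layer of prod_mlp: neurons 2l and 2l+1 carry w l and -w l, and for every
  product slot i < m and grid index k < K the neurons 2 nin + 2 (i K + k) (+1) carry
  w (pP i) + w (pF i) - u k and w (pP i) - w (pF i) - u k.\<close>
definition prod_mlp_hidden :: "nat \<Rightarrow> nat \<Rightarrow> nat \<Rightarrow> (nat \<Rightarrow> nat) \<Rightarrow> (nat \<Rightarrow> nat) \<Rightarrow> (nat \<Rightarrow> real) \<Rightarrow> affmap" where
  "prod_mlp_hidden nin m K pP pF u = \<lparr>af_in = nin, af_out = 2*nin + 2*(m*K),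
     af_A = (\<lambda>j l. if j < 2*nin then (if l = j div 2 then (if even j then 1 else -1) else 0)
            else (if l = pP (((j - 2*nin) div 2) div K) then 1 else 0)
               + (if l = pF (((j - 2*nin) div 2) div K) then (if even (j - 2*nin) then 1 else -1) else 0)),
     af_b = (\<lambda>j. if j < 2*nin then 0 else - u (((j - 2*nin) div 2) mod K))\<rparr>"

definition prod_mlp_output :: "nat \<Rightarrow> nat \<Rightarrow> nat \<Rightarrow> nat \<Rightarrow> (nat \<Rightarrow> nat \<Rightarrow> real) \<Rightarrow> (nat \<Rightarrow> nat \<Rightarrow> real)
     \<Rightarrow> (nat \<Rightarrow> real) \<Rightarrow> (nat \<Rightarrow> real) \<Rightarrow> affmap" where
  "prod_mlp_output nin m K nout C M c b = \<lparr>af_in = 2*nin + 2*(m*K), af_out = nout,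
     af_A = (\<lambda>oi j. if j < 2*nin then (if even j then C oi (j div 2) else - C oi (j div 2))
            else (if even (j - 2*nin) then M oi (((j - 2*nin) div 2) div K) * c (((j - 2*nin) div 2) mod K)
                  else - (M oi (((j - 2*nin) div 2) div K) * c (((j - 2*nin) div 2) mod K)))),
     af_b = b\<rparr>"

definition prod_mlp where
  "prod_mlp nin m K pP pF u nout C M c b = [prod_mlp_hidden nin m K pP pF u, prod_mlp_output nin m K nout C M c b]"

lemma prod_mlp_wf:
  "mlp_wf (prod_mlp nin m K pP pF u nout C M c b)"
  "mlp_in (prod_mlp nin m K pP pF u nout C M c b) = nin"
  "mlp_out (prod_mlp nin m K pP pF u nout C M c b) = nout"
  unfolding prod_mlp_def mlp_wf_def mlp_in_def mlp_out_def
  by (simp_all add: prod_mlp_hidden_def prod_mlp_output_def nth_Cons')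

lemma prod_mlp_hidden_copy:
  assumes "l < nin"
  shows "aff_eval (prod_mlp_hidden nin m K pP pF u) w (2*l) = w l"
    and "aff_eval (prod_mlp_hidden nin m K pP pF u) w (2*l+1) = - w l"
  using assms sum_indicator_mult[OF assms, of 1 w] sum_indicator_mult[OF assms, of "-1" w]
  by (simp_all add: aff_eval_def prod_mlp_hidden_def)

lemma prod_mlp_hidden_eval:
  assumes "2*nin \<le> j" "j < 2*nin + 2*(m*K)"
    and "pP ((j - 2*nin) div 2 div K) < nin" "pF ((j - 2*nin) div 2 div K) < nin"
  shows "aff_eval (prod_mlp_hidden nin m K pP pF u) w j = w (pP ((j - 2*nin) div 2 div K))
      + (if even (j - 2*nin) then 1 else -1) * w (pF ((j - 2*nin) div 2 div K)) - u ((j - 2*nin) div 2 mod K)"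
proof -
  define P where "P = pP ((j - 2*nin) div 2 div K)"
  define F where "F = pF ((j - 2*nin) div 2 div K)"
  define sg :: real where "sg = (if even (j - 2*nin) then 1 else -1)"
  have A: "af_A (prod_mlp_hidden nin m K pP pF u) j l = (if l = P then 1 else 0) + (if l = F then sg else 0)" for l
    using assms(1) unfolding prod_mlp_hidden_def P_def F_def sg_def by auto
  have "(\<Sum>l<nin. ((if l = P then 1 else 0) + (if l = F then sg else 0)) * w l) = w P + sg * w F"
    using sum_indicator_mult[of P nin 1 w] sum_indicator_mult[of F nin sg w] assms(3,4)
    unfolding P_def F_def by (simp add: distrib_right sum.distrib)
  then show ?thesis
    using assms(1,2) unfolding aff_eval_def A P_def F_def sg_def by (simp add: prod_mlp_hidden_def)
qed

lemma index_in_blocks: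
  fixes i k m K :: nat
  assumes "i < m" "k < K"
  shows "i*K+k < m*K"
proof -
  have "i*K+k < (i+1)*K" using assms(2) by simp
  also have "(i+1)*K \<le> m*K" using assms(1) by (intro mult_le_mono1) simp
  finally show ?thesis .
qed

lemma prod_mlp_hidden_pair:
  assumes "i < m" "k < K" "pP i < nin" "pF i < nin"
  shows "aff_eval (prod_mlp_hidden nin m K pP pF u) w (2*nin + 2*(i*K+k)) = w (pP i) + w (pF i) - u k"
    and "aff_eval (prod_mlp_hidden nin m K pP pF u) w (2*nin + 2*(i*K+k) + 1) = w (pP i) - w (pF i) - u k"
proof -
  have "i*K+k < m*K" by (rule index_in_blocks[OF assms(1,2)])
  moreover have "(i*K+k) div K = i" "(i*K+k) mod K = k" using assms(2) by auto
  ultimately show "aff_eval (prod_mlp_hidden nin m K pP pF u) w (2*nin + 2*(i*K+k)) = w (pP i) + w (pF i) - u k"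
    and "aff_eval (prod_mlp_hidden nin m K pP pF u) w (2*nin + 2*(i*K+k) + 1) = w (pP i) - w (pF i) - u k"
    using prod_mlp_hidden_eval[of nin "2*nin + 2*(i*K+k)" m K pP pF u w]
      prod_mlp_hidden_eval[of nin "2*nin + 2*(i*K+k) + 1" m K pP pF u w] assms by simp_all
qed

text \<open>The copy neurons pass w through since max 0 x - max 0 (-x) = x.\<close>
lemma prod_mlp_eval:
  assumes P: "\<forall>i<m. pP i < nin \<and> pF i < nin"
  shows "mlp_eval (prod_mlp nin m K pP pF u nout C M c b) w oi = (if oi < nout then
     (\<Sum>l<nin. C oi l * w l) + (\<Sum>i<m. M oi i * relu_prod K u c (w (pP i)) (w (pF i))) + b oi else 0)"
proof (cases "oi < nout")
  case False then show ?thesis by (simp add: prod_mlp_def aff_eval_def prod_mlp_output_def)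
next
  case True
  define A2 where "A2 = prod_mlp_output nin m K nout C M c b"
  define r where "r = relu (aff_eval (prod_mlp_hidden nin m K pP pF u) w)"
  have ev: "mlp_eval (prod_mlp nin m K pP pF u nout C M c b) w oi
      = (\<Sum>j<2*nin + 2*(m*K). af_A A2 oi j * r j) + b oi"
    using True by (simp add: prod_mlp_def aff_eval_def A2_def r_def prod_mlp_output_def)
  have copies: "(\<Sum>j<2*nin. af_A A2 oi j * r j) = (\<Sum>l<nin. C oi l * w l)"
    unfolding sum_lessThan_pairs
  proof (rule sum.cong[OF refl])
    fix l assume l: "l \<in> {..<nin}"
    have "r (2*l) = max 0 (w l)" "r (2*l+1) = max 0 (- w l)"
      using l prod_mlp_hidden_copy[of l nin m K pP pF u w] by (auto simp: r_def relu_def)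
    then show "af_A A2 oi (2*l) * r (2*l) + af_A A2 oi (2*l+1) * r (2*l+1) = C oi l * w l"
      using l by (auto simp: A2_def prod_mlp_output_def max_def algebra_simps)
  qed
  have products: "(\<Sum>j<2*(m*K). af_A A2 oi (2*nin + j) * r (2*nin + j))
      = (\<Sum>i<m. M oi i * relu_prod K u c (w (pP i)) (w (pF i)))"
    unfolding sum_lessThan_pairs[where n="m*K"] sum_lessThan_blocks[where m=m and K=K] relu_prod_def
      sum_distrib_left
  proof (rule sum.cong[OF refl], rule sum.cong[OF refl])
    fix i k assume i: "i \<in> {..<m}" and k: "k \<in> {..<K}"
    have "(i*K+k) div K = i" "(i*K+k) mod K = k" using k by auto
    then have a: "af_A A2 oi (2*nin + 2*(i*K+k)) = M oi i * c k"
        "af_A A2 oi (2*nin + (2*(i*K+k)+1)) = - (M oi i * c k)"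
      by (auto simp: A2_def prod_mlp_output_def)
    have "r (2*nin + 2*(i*K+k)) = max 0 (w (pP i) + w (pF i) - u k)"
         "r (2*nin + (2*(i*K+k)+1)) = max 0 (w (pP i) - w (pF i) - u k)"
      using i k P prod_mlp_hidden_pair[of i m k K pP nin pF u w] by (auto simp: r_def relu_def add.assoc)
    then show "af_A A2 oi (2*nin + 2*(i*K+k)) * r (2*nin + 2*(i*K+k))
      + af_A A2 oi (2*nin + (2*(i*K+k)+1)) * r (2*nin + (2*(i*K+k)+1))
      = M oi i * (c k * (max 0 (w (pP i) + w (pF i) - u k) - max 0 (w (pP i) - w (pF i) - u k)))"
      unfolding a by (simp add: algebra_simps)
  qed
  show ?thesis using True unfolding ev sum_lessThan_add copies products by simp
qed

section \<open>Approximating products by ReLU networks\<close>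

text \<open>The piecewise linear interpolant of v^2 at the nodes a0 + k h, k \<le> K, written as
  a0^2 plus ReLU ramps starting at the nodes; the slope increments are 2 a0 + h at the first
  node and 2 h at the others.\<close>
definition interp_slope :: "real \<Rightarrow> real \<Rightarrow> nat \<Rightarrow> real" where
  "interp_slope a0 h k = (if k = 0 then 2*a0 + h else 2*h)"

definition square_interp :: "nat \<Rightarrow> real \<Rightarrow> real \<Rightarrow> real \<Rightarrow> real" where
  "square_interp K a0 h v = a0^2 + (\<Sum>k<K. interp_slope a0 h k * max 0 (v - (a0 + real k * h)))"

lemma square_interp_ramps_sum:
  "a0^2 + (\<Sum>k<Suc j. interp_slope a0 h k * (v - (a0 + real k * h)))
     = v^2 + (v - (a0 + real j * h)) * ((a0 + real (Suc j) * h) - v)"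
proof (induction j)
  case (Suc j)
  have "a0^2 + (\<Sum>k<Suc (Suc j). interp_slope a0 h k * (v - (a0 + real k * h)))
     = (a0^2 + (\<Sum>k<Suc j. interp_slope a0 h k * (v - (a0 + real k * h)))) + 2*h*(v - (a0 + real (Suc j) * h))"
    by (simp add: interp_slope_def)
  then show ?case unfolding Suc by (simp add: power2_eq_square algebra_simps)
qed (simp add: interp_slope_def power2_eq_square algebra_simps)

lemma grid_cell_exists:
  assumes "0 < h" "0 < K" "a0 \<le> v" "v \<le> a0 + real K * h"
  shows "\<exists>j<K. a0 + real j * h \<le> v \<and> v \<le> a0 + real (Suc j) * h"
  using assms(2,4)
proof (induction K)
  case (Suc K)
  show ?case
  proof (cases "v \<le> a0 + real K * h \<and> 0 < K")
    case True then show ?thesis using Suc.IH by (metis less_SucI)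
  next
    case False
    then have "a0 + real K * h \<le> v" using assms(3) by (cases "K = 0") auto
    then show ?thesis using Suc.prems(2) by (intro exI[of _ K]) auto
  qed
qed simp

lemma square_interp_on_cell:
  assumes "0 < h" "j < K" "a0 + real j * h \<le> v" "v \<le> a0 + real (Suc j) * h"
  shows "square_interp K a0 h v = v^2 + (v - (a0 + real j * h)) * ((a0 + real (Suc j) * h) - v)"
proof -
  have "(\<Sum>k<K. interp_slope a0 h k * max 0 (v - (a0 + real k * h)))
      = (\<Sum>k<Suc j. interp_slope a0 h k * max 0 (v - (a0 + real k * h)))"
  proof (rule sum.mono_neutral_right)
    show "\<forall>i\<in>{..<K} - {..<Suc j}. interp_slope a0 h i * max 0 (v - (a0 + real i * h)) = 0"
    proof
      fix i assume "i \<in> {..<K} - {..<Suc j}"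
      then have "real (Suc j) * h \<le> real i * h" using assms(1) by (intro mult_right_mono) auto
      then show "interp_slope a0 h i * max 0 (v - (a0 + real i * h)) = 0" using assms(4) by auto
    qed
  qed (use assms in auto)
  also have "\<dots> = (\<Sum>k<Suc j. interp_slope a0 h k * (v - (a0 + real k * h)))"
  proof (rule sum.cong[OF refl])
    fix k assume "k \<in> {..<Suc j}"
    then have "real k * h \<le> real j * h" using assms(1) by (intro mult_right_mono) auto
    then show "interp_slope a0 h k * max 0 (v - (a0 + real k * h)) = interp_slope a0 h k * (v - (a0 + real k * h))"
      using assms(3) by auto
  qed
  finally show ?thesis unfolding square_interp_def using square_interp_ramps_sum by simp
qed

lemma square_interp_error:
  assumes "0 < h" "0 < K" "a0 \<le> v" "v \<le> a0 + real K * h"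
  shows "0 \<le> square_interp K a0 h v - v^2 \<and> square_interp K a0 h v - v^2 \<le> h^2/4"
proof -
  obtain j where j: "j < K" "a0 + real j * h \<le> v" "v \<le> a0 + real (Suc j) * h"
    using grid_cell_exists[OF assms] by blast
  define x where "x = v - (a0 + real j * h)"
  have "square_interp K a0 h v - v^2 = x * (h - x)"
    unfolding square_interp_on_cell[OF assms(1) j] x_def by (simp add: algebra_simps)
  moreover have "0 \<le> x" "x \<le> h" using j unfolding x_def by (auto simp: algebra_simps)
  moreover have "x * (h - x) \<le> h^2/4"
    using zero_le_power2[of "h - 2*x"] by (simp add: power2_eq_square algebra_simps)
  ultimately show ?thesis by simp
qed

lemma relu_prod_square_interp:
  "relu_prod K (\<lambda>k. a0 + real k * h) (\<lambda>k. interp_slope a0 h k / 4) a b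
     = (square_interp K a0 h (a + b) - square_interp K a0 h (a - b)) / 4"
proof -
  have "(square_interp K a0 h (a + b) - square_interp K a0 h (a - b)) / 4
      = (\<Sum>k<K. interp_slope a0 h k * max 0 (a + b - (a0 + real k * h))
           - interp_slope a0 h k * max 0 (a - b - (a0 + real k * h))) / 4"
    by (simp add: square_interp_def sum_subtractf)
  then show ?thesis
    unfolding relu_prod_def sum_divide_distrib
    by (simp add: right_diff_distrib diff_divide_distrib)
qed

lemma relu_prod_error:
  assumes "0 < h" "0 < K" "real K * h = 4*A" "\<bar>a\<bar> \<le> A" "\<bar>b\<bar> \<le> A"
  shows "\<bar>relu_prod K (\<lambda>k. -(2*A) + real k * h) (\<lambda>k. interp_slope (-(2*A)) h k / 4) a b - a*b\<bar> \<le> h^2/16"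
proof -
  define P where "P = square_interp K (-(2*A)) h (a+b) - (a+b)^2"
  define Q where "Q = square_interp K (-(2*A)) h (a-b) - (a-b)^2"
  have "0 \<le> P" "P \<le> h^2/4" "0 \<le> Q" "Q \<le> h^2/4"
    using square_interp_error[OF assms(1,2), of "-(2*A)" "a+b"]
      square_interp_error[OF assms(1,2), of "-(2*A)" "a-b"] assms(3-5)
    unfolding P_def Q_def by auto
  then have bound: "\<bar>(P - Q) / 4\<bar> \<le> h^2/16" unfolding abs_le_iff by (simp add: field_simps)
  have e: "relu_prod K (\<lambda>k. -(2*A) + real k * h) (\<lambda>k. interp_slope (-(2*A)) h k / 4) a b - a*b
      = (P - Q) / 4"
    unfolding relu_prod_square_interp P_def Q_def by (simp add: power2_eq_square field_simps)
  show ?thesis unfolding e by (rule bound)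
qed

lemma relu_prod_approx:
  assumes "0 < A" "0 < \<delta>"
  shows "\<exists>K u c. \<forall>a b. \<bar>a\<bar> \<le> A \<longrightarrow> \<bar>b\<bar> \<le> A \<longrightarrow> \<bar>relu_prod K u c a b - a*b\<bar> \<le> \<delta>"
proof -
  define m where "m = min 1 (16*\<delta>)"
  have m: "0 < m" "m \<le> 1" "m \<le> 16*\<delta>" using assms unfolding m_def by auto
  obtain K :: nat where K: "4*A/m < real K" using reals_Archimedean2 by blast
  have Kp: "0 < K" using K m assms by (smt (verit) divide_pos_pos of_nat_0_less_iff)
  define h where "h = 4*A / real K"
  have hp: "0 < h" and hK: "real K * h = 4*A" unfolding h_def using Kp assms by simp_all
  have "h < m" unfolding h_def using K Kp m by (simp add: field_simps)
  then have "h^2 \<le> h" using hp m by (simp add: power2_eq_square mult_le_cancel_right1)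
  then have "h^2/16 \<le> \<delta>" using \<open>h < m\<close> m by simp
  then show ?thesis using relu_prod_error[OF hp Kp hK] by (meson order_trans)
qed

section \<open>Attention layers on part of the stream\<close>

text \<open>The attention layer theta acting on the coordinates [off, D) of a wider stream; its
  residual connection leaves all other coordinates of the stream unchanged.\<close>
definition embed_attn :: "nat \<Rightarrow> nat \<Rightarrow> attn_param \<Rightarrow> attn_param" where
  "embed_attn off D \<theta> = \<lparr>a_din = D, a_dhead = a_dhead \<theta>, a_k = a_k \<theta>, a_H = a_H \<theta>,
     a_W = (\<lambda>h i j. if off \<le> i \<and> i < D then a_W \<theta> h (i - off) j else 0),
     a_K = (\<lambda>h a j. if off \<le> j \<and> j < D then a_K \<theta> h a (j - off) else 0),
     a_Q = (\<lambda>h a j. if off \<le> j \<and> j < D then a_Q \<theta> h a (j - off) else 0),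
     a_V = (\<lambda>h j l. if off \<le> l \<and> l < D then a_V \<theta> h j (l - off) else 0)\<rparr>"

definition window :: "nat \<Rightarrow> nat \<Rightarrow> vec \<Rightarrow> vec" where
  "window off n w = (\<lambda>j. if j < n then w (off + j) else 0)"

lemma borel_measurable_window: "window off n \<in> borel_measurable borel"
  by (rule measurable_coordinatewise_then_product) (simp add: window_def)

lemma sum_embedded:
  "(\<Sum>j<off+n. (if off \<le> j then g (j-off) else 0) * (w j :: real)) = (\<Sum>j<n. g j * window off n w j)"
  "(\<Sum>j<off+n. (if off \<le> j \<and> j < off+n then g (j-off) else 0) * (w j :: real)) = (\<Sum>j<n. g j * window off n w j)"
  unfolding sum_lessThan_add by (simp_all add: window_def)

lemma att_score_embed_attn:
  assumes "a_din \<theta> = n"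
  shows "att_score (embed_attn off (off+n) \<theta>) h w y = att_score \<theta> h (window off n w) (window off n y)"
  unfolding att_score_def using assms by (simp add: embed_attn_def sum_embedded)

lemma value_embed_attn:
  assumes "a_din \<theta> = n"
  shows "(\<Sum>l<a_din (embed_attn off (off+n) \<theta>). a_V (embed_attn off (off+n) \<theta>) h j l * y l)
       = (\<Sum>l<a_din \<theta>. a_V \<theta> h j l * window off n y l)"
  using assms by (simp add: embed_attn_def sum_embedded)

lemma Gamma_embed_attn:
  assumes sets: "sets \<nu> = sets (borel :: vec measure)" and n: "a_din \<theta> = n" and i: "i < n"
  shows "Gamma (embed_attn off (off+n) \<theta>) \<nu> w (off+i)
       = Gamma \<theta> (distr \<nu> borel (window off n)) (window off n w) i"
proof -
  let ?\<theta> = "embed_attn off (off+n) \<theta>"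
  let ?t = "window off n"
  have tm: "?t \<in> measurable \<nu> borel"
    unfolding measurable_cong_sets[OF sets refl] by (rule borel_measurable_window)
  have Z: "(\<integral>z. exp (att_score ?\<theta> h w z) \<partial>\<nu>) = (\<integral>z. exp (att_score \<theta> h (?t w) z) \<partial>distr \<nu> borel ?t)" for h
    unfolding att_score_embed_attn[OF n]
    by (rule integral_distr[OF tm, symmetric]) (intro borel_measurable_exp_compose borel_measurable_att_score)
  have I: "(\<integral>y. (exp (att_score ?\<theta> h w y) / (\<integral>z. exp (att_score ?\<theta> h w z) \<partial>\<nu>))
                 * (\<Sum>l<a_din ?\<theta>. a_V ?\<theta> h j l * y l) \<partial>\<nu>)
         = (\<integral>y. (exp (att_score \<theta> h (?t w) y) / (\<integral>z. exp (att_score \<theta> h (?t w) z) \<partial>distr \<nu> borel ?t))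
                 * (\<Sum>l<a_din \<theta>. a_V \<theta> h j l * y l) \<partial>distr \<nu> borel ?t)" for h j
    unfolding Z unfolding value_embed_attn[OF n] att_score_embed_attn[OF n]
    by (rule integral_distr[OF tm, symmetric])
       (intro borel_measurable_times borel_measurable_divide borel_measurable_exp_compose
          borel_measurable_att_score borel_measurable_const borel_measurable_sum measurable_product_coordinates)
  have "a_W ?\<theta> h (off+i) j = a_W \<theta> h i j" for h j using i by (simp add: embed_attn_def)
  moreover have "?t w i = w (off+i)" using i by (simp add: window_def)
  ultimately show ?thesis
    unfolding Gamma_def using i n I by (simp add: embed_attn_def)
qed

lemma Gamma_embed_attn_below:
  assumes "i < off" "a_din \<theta> = n"
  shows "Gamma (embed_attn off (off+n) \<theta>) \<nu> w i = w i"
  using assms unfolding Gamma_def by (simp add: embed_attn_def)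

definition trivial_attn :: "nat \<Rightarrow> attn_param" where
  "trivial_attn d = \<lparr>a_din = d, a_dhead = 1, a_k = 1, a_H = 0, a_W = (\<lambda>_ _ _. 0),
     a_K = (\<lambda>_ _ _. 0), a_Q = (\<lambda>_ _ _. 0), a_V = (\<lambda>_ _ _. 0)\<rparr>"

lemma Gamma_trivial_attn: "Gamma (trivial_attn d) \<mu> z j = (if j < d then z j else 0)"
  unfolding Gamma_def by (simp add: trivial_attn_def)

section \<open>Uniform bounds on attention outputs\<close>

lemma compact_continuous_abs_bound:
  fixes f :: "vec \<Rightarrow> real"
  assumes "compact \<Omega>" "continuous_on \<Omega> f"
  shows "\<exists>B. \<forall>z\<in>\<Omega>. \<bar>f z\<bar> \<le> B"
  using compact_imp_bounded[OF compact_continuous_image[OF assms(2,1)]] unfolding bounded_real by auto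

lemma finite_family_abs_bound:
  fixes f :: "nat \<Rightarrow> 'a \<Rightarrow> real"
  assumes "\<forall>j<n. \<exists>b. \<forall>z\<in>S. \<bar>f j z\<bar> \<le> b"
  shows "\<exists>B\<ge>0. \<forall>j<n. \<forall>z\<in>S. \<bar>f j z\<bar> \<le> B"
proof -
  from assms obtain b where b: "\<forall>j<n. \<forall>z\<in>S. \<bar>f j z\<bar> \<le> b j" by metis
  have "\<bar>f j z\<bar> \<le> (\<Sum>j<n. \<bar>b j\<bar>)" if "j < n" "z \<in> S" for j z
    using b that member_le_sum[of j "{..<n}" "\<lambda>j. \<bar>b j\<bar>"] by force
  then show ?thesis by (intro exI[of _ "\<Sum>j<n. \<bar>b j\<bar>"]) (auto intro: sum_nonneg)
qed

lemma continuous_on_coordinate [continuous_intros]: "continuous_on S (\<lambda>x::vec. x i)"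
  by (rule continuous_on_subset[OF continuous_on_product_coordinates]) simp

lemma continuous_on_aff_eval [continuous_intros]: "continuous_on S (\<lambda>z. aff_eval F z j)"
  by (cases "j < af_out F") (simp_all add: aff_eval_def continuous_intros)

lemma continuous_on_att_score_aff_eval [continuous_intros]:
  "continuous_on S (\<lambda>z. att_score \<theta> h x (aff_eval F z))"
  unfolding att_score_def by (intro continuous_intros)

lemma aff_eval_bounded_on_compact:
  assumes "compact \<Omega>"
  shows "\<exists>C\<ge>0. \<forall>z\<in>\<Omega>. \<forall>j. \<bar>aff_eval F z j\<bar> \<le> C"
proof -
  have "\<forall>j<af_out F. \<exists>b. \<forall>z\<in>\<Omega>. \<bar>aff_eval F z j\<bar> \<le> b"
    using compact_continuous_abs_bound[OF assms] continuous_on_aff_eval by blast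
  from finite_family_abs_bound[OF this] obtain B
    where B: "B \<ge> 0" "\<forall>j<af_out F. \<forall>z\<in>\<Omega>. \<bar>aff_eval F z j\<bar> \<le> B" by blast
  have "\<bar>aff_eval F z j\<bar> \<le> B" if "z \<in> \<Omega>" for z j
    using B that by (cases "j < af_out F") (auto simp: aff_eval_def)
  then show ?thesis using B(1) by blast
qed

text \<open>A softmax average of g lies in the range of g; in the junk case of a vanishing
  normaliser the average is 0.\<close>
lemma softmax_average_abs_le:
  fixes s g :: "vec \<Rightarrow> real"
  assumes "prob_space \<mu>" and ae: "AE z in \<mu>. z \<in> \<Omega>"
    and sm: "s \<in> borel_measurable \<mu>"
    and sb: "\<forall>z\<in>\<Omega>. \<bar>s z\<bar> \<le> S" and gb: "\<forall>z\<in>\<Omega>. \<bar>g z\<bar> \<le> V" and V: "0 \<le> V"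
  shows "\<bar>\<integral>z. (exp (s z) / (\<integral>z'. exp (s z') \<partial>\<mu>)) * g z \<partial>\<mu>\<bar> \<le> V"
proof -
  interpret prob_space \<mu> by fact
  define Z where "Z = (\<integral>z'. exp (s z') \<partial>\<mu>)"
  have Ei: "integrable \<mu> (\<lambda>z. exp (s z))"
  proof (rule integrable_const_bound[where B="exp S"])
    show "AE x in \<mu>. norm (exp (s x)) \<le> exp S" using ae by eventually_elim (use sb in auto)
  qed (use sm in \<open>rule borel_measurable_exp_compose\<close>)
  have "0 \<le> Z" unfolding Z_def by (rule integral_nonneg_AE) auto
  show ?thesis
  proof (cases "Z = 0")
    case True then show ?thesis using V unfolding Z_def[symmetric] by simp
  next
    case False
    with \<open>0 \<le> Z\<close> have Zp: "0 < Z" by simp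
    have "\<bar>\<integral>z. (exp (s z) / Z) * g z \<partial>\<mu>\<bar> \<le> (\<integral>z. \<bar>(exp (s z) / Z) * g z\<bar> \<partial>\<mu>)"
      by (rule integral_abs_bound)
    also have "\<dots> \<le> (\<integral>z. (exp (s z) / Z) * V \<partial>\<mu>)"
    proof (rule integral_mono_AE')
      show "integrable \<mu> (\<lambda>z. exp (s z) / Z * V)" using Ei by simp
      show "AE z in \<mu>. \<bar>exp (s z) / Z * g z\<bar> \<le> exp (s z) / Z * V"
        using ae
      proof eventually_elim
        case (elim z)
        then have "\<bar>g z\<bar> \<le> V" using gb by auto
        then show ?case using Zp by (simp add: abs_mult mult_left_mono divide_right_mono)
      qed
      show "AE z in \<mu>. 0 \<le> exp (s z) / Z * V" using Zp V by simp
    qed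
    also have "\<dots> = V" using Zp unfolding Z_def by simp
    finally show ?thesis unfolding Z_def .
  qed
qed

lemma attention_head_abs_le:
  assumes \<mu>: "\<mu> \<in> prob_measures_on \<Omega>" and "compact \<Omega>"
    and CF: "0 \<le> CF" "\<forall>z\<in>\<Omega>. \<forall>j. \<bar>aff_eval F z j\<bar> \<le> CF"
  shows "\<bar>\<integral>y. (exp (att_score \<theta> h x y) / (\<integral>z. exp (att_score \<theta> h x z) \<partial>distr \<mu> borel (aff_eval F)))
                 * (\<Sum>l<a_din \<theta>. a_V \<theta> h j l * y l) \<partial>distr \<mu> borel (aff_eval F)\<bar>
         \<le> (\<Sum>l<a_din \<theta>. \<bar>a_V \<theta> h j l\<bar>) * CF"
proof -
  note \<mu>D = prob_measures_onD[OF \<mu>]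
  have Fm: "aff_eval F \<in> measurable \<mu> borel"
    unfolding measurable_cong_sets[OF \<mu>D(2) refl] by (rule borel_measurable_aff_eval)
  obtain S where S: "\<forall>z\<in>\<Omega>. \<bar>att_score \<theta> h x (aff_eval F z)\<bar> \<le> S"
    using compact_continuous_abs_bound[OF \<open>compact \<Omega>\<close> continuous_on_att_score_aff_eval] by blast
  have Z: "(\<integral>z. exp (att_score \<theta> h x z) \<partial>distr \<mu> borel (aff_eval F))
      = (\<integral>z. exp (att_score \<theta> h x (aff_eval F z)) \<partial>\<mu>)"
    by (rule integral_distr[OF Fm]) (intro borel_measurable_exp_compose borel_measurable_att_score)
  have V: "\<bar>\<Sum>l<a_din \<theta>. a_V \<theta> h j l * aff_eval F z l\<bar> \<le> (\<Sum>l<a_din \<theta>. \<bar>a_V \<theta> h j l\<bar>) * CF"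
    if "z \<in> \<Omega>" for z
  proof -
    have "\<bar>\<Sum>l<a_din \<theta>. a_V \<theta> h j l * aff_eval F z l\<bar> \<le> (\<Sum>l<a_din \<theta>. \<bar>a_V \<theta> h j l * aff_eval F z l\<bar>)"
      by (rule sum_abs)
    also have "\<dots> \<le> (\<Sum>l<a_din \<theta>. \<bar>a_V \<theta> h j l\<bar> * CF)"
      using CF that by (intro sum_mono) (simp add: abs_mult mult_left_mono)
    finally show ?thesis by (simp add: sum_distrib_right)
  qed
  show ?thesis
    unfolding Z
    by (subst integral_distr[OF Fm],
        intro borel_measurable_times borel_measurable_divide borel_measurable_exp_compose
          borel_measurable_att_score borel_measurable_const borel_measurable_sum measurable_product_coordinates,
        rule softmax_average_abs_le[OF \<mu>D(1,3) _ S],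
        rule measurable_compose[OF Fm borel_measurable_att_score],
        use V CF in \<open>auto intro: sum_nonneg mult_nonneg_nonneg\<close>)
qed

lemma Gamma_aff_bounded:
  assumes "compact \<Omega>"
  shows "\<exists>B\<ge>0. \<forall>\<mu>\<in>prob_measures_on \<Omega>. \<forall>z\<in>\<Omega>. \<forall>i.
           \<bar>Gamma \<theta> (distr \<mu> borel (aff_eval F)) (aff_eval F z) i\<bar> \<le> B"
proof -
  obtain CF where CF: "CF \<ge> 0" "\<forall>z\<in>\<Omega>. \<forall>j. \<bar>aff_eval F z j\<bar> \<le> CF"
    using aff_eval_bounded_on_compact[OF assms] by blast
  define Bi where "Bi i = (\<Sum>h<a_H \<theta>. \<Sum>j<a_dhead \<theta>. \<bar>a_W \<theta> h i j\<bar> * ((\<Sum>l<a_din \<theta>. \<bar>a_V \<theta> h j l\<bar>) * CF))" for i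
  have Bi0: "0 \<le> Bi i" for i unfolding Bi_def using CF(1) by (auto intro!: sum_nonneg)
  define B where "B = CF + (\<Sum>i<a_din \<theta>. Bi i)"
  have bound: "\<bar>Gamma \<theta> (distr \<mu> borel (aff_eval F)) (aff_eval F z) i\<bar> \<le> CF + Bi i"
    if \<mu>: "\<mu> \<in> prob_measures_on \<Omega>" and z: "z \<in> \<Omega>" and i: "i < a_din \<theta>" for \<mu> z i
  proof -
    note head = attention_head_abs_le[OF \<mu> assms CF, of \<theta> _ "aff_eval F z"]
    have "\<bar>\<Sum>h<a_H \<theta>. \<Sum>j<a_dhead \<theta>. a_W \<theta> h i j *
         (\<integral>y. (exp (att_score \<theta> h (aff_eval F z) y) /
            (\<integral>z'. exp (att_score \<theta> h (aff_eval F z) z') \<partial>distr \<mu> borel (aff_eval F)))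
         * (\<Sum>l<a_din \<theta>. a_V \<theta> h j l * y l) \<partial>distr \<mu> borel (aff_eval F))\<bar> \<le> Bi i"
      unfolding Bi_def
      by (rule order_trans[OF sum_abs], rule sum_mono, rule order_trans[OF sum_abs], rule sum_mono)
         (simp only: abs_mult, intro mult_left_mono head abs_ge_zero)
    then show ?thesis using i CF z unfolding Gamma_def by (smt (verit))
  qed
  have B0: "0 \<le> B" unfolding B_def using CF(1) Bi0 by (simp add: sum_nonneg)
  have "\<bar>Gamma \<theta> (distr \<mu> borel (aff_eval F)) (aff_eval F z) i\<bar> \<le> B"
    if "\<mu> \<in> prob_measures_on \<Omega>" "z \<in> \<Omega>" for \<mu> z i
  proof (cases "i < a_din \<theta>")
    case True
    moreover have "CF + Bi i \<le> B" unfolding B_def using True Bi0 by (simp add: member_le_sum)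
    ultimately show ?thesis using bound[OF that] by (meson order_trans)
  qed (use B0 in \<open>simp add: Gamma_def\<close>)
  with B0 show ?thesis by blast
qed

section \<open>The approximating network\<close>

text \<open>The residual stream has width D = d + 3 d': the input in [0, d), the partial sum over n
  in [d, d + d'), the running product over t in [d + d', d + 2 d') and the current factor
  F_{t,n} x in [d + 2 d', D). Attention step k < T N treats (t, n) = (k mod T, k div T).\<close>
locale product_net =
  fixes d d' T N :: nat and Ft :: "nat \<Rightarrow> nat \<Rightarrow> affmap" and \<theta>t :: "nat \<Rightarrow> nat \<Rightarrow> attn_param"
    and K :: nat and u c :: "nat \<Rightarrow> real"
  assumes T_pos: "0 < T" and N_pos: "0 < N"
    and Ft_dims: "\<forall>t<T. \<forall>n<N. af_in (Ft t n) = d \<and> af_out (Ft t n) = d'"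
    and \<theta>t_dims: "\<forall>t<T. \<forall>n<N. a_din (\<theta>t t n) = d' \<and> a_dhead (\<theta>t t n) = 1 \<and> a_k (\<theta>t t n) = 1
                      \<and> a_H (\<theta>t t n) = d'"
begin

definition "D = d + 3*d'"
definition "prod_idx i = d + d' + i"
definition "factor_idx i = d + 2*d' + i"
definition "t_of k = k mod T"
definition "n_of k = k div T"
definition "ends_product k \<longleftrightarrow> k mod T = T - 1"

definition "C_init oi l = (if oi < d then (if l = oi then 1 else 0)
   else if d + 2*d' \<le> oi \<and> oi < D then af_A (Ft 0 0) (oi - (d + 2*d')) l else 0)"
definition "b_init oi = (if d + d' \<le> oi \<and> oi < d + 2*d' then 1
   else if d + 2*d' \<le> oi \<and> oi < D then af_b (Ft 0 0) (oi - (d + 2*d')) else 0)"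
definition "mlp_init = prod_mlp d 0 K prod_idx factor_idx u D C_init (\<lambda>_ _. 0) c b_init"

definition "C_step k oi l = (if oi < d + d' then (if l = oi then 1 else 0)
   else if d + 2*d' \<le> oi \<and> oi < D then (if l < d then af_A (Ft (t_of (Suc k)) (n_of (Suc k))) (oi - (d + 2*d')) l else 0)
   else 0)"
definition "M_step k oi i = (if d \<le> oi \<and> oi < d + d' then (if i = oi - d \<and> ends_product k then 1 else 0)
   else if d + d' \<le> oi \<and> oi < d + 2*d' then (if i = oi - (d + d') \<and> \<not> ends_product k then 1 else 0) else 0)"
definition "b_step k oi = (if d + d' \<le> oi \<and> oi < d + 2*d' then (if ends_product k then 1 else 0)
   else if d + 2*d' \<le> oi \<and> oi < D then af_b (Ft (t_of (Suc k)) (n_of (Suc k))) (oi - (d + 2*d')) else 0)"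
definition "C_last oi l = (if l = d + oi then 1 else 0)"
definition "M_last oi i = (if i = oi then 1 else 0)"

definition "mlp_step k = (if Suc k < T*N then prod_mlp D d' K prod_idx factor_idx u D (C_step k) (M_step k) c (b_step k)
                    else prod_mlp D d' K prod_idx factor_idx u d' C_last M_last c (\<lambda>_. 0))"
definition "attn_step k = embed_attn (d + 2*d') D (\<theta>t (t_of k) (n_of k))"

definition "net = (trivial_attn d, mlp_init) # map (\<lambda>k. (attn_step k, mlp_step k)) [0..<T*N]"

lemma step_indices_bounded: "k < T*N \<Longrightarrow> t_of k < T \<and> n_of k < N"
  unfolding t_of_def n_of_def using T_pos by (simp add: less_mult_imp_div_less mult.commute)

lemma step_indices_Suc:
  shows "\<not> ends_product k \<Longrightarrow> t_of (Suc k) = Suc (t_of k) \<and> n_of (Suc k) = n_of k"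
    and "ends_product k \<Longrightarrow> t_of (Suc k) = 0 \<and> n_of (Suc k) = Suc (n_of k)"
  using T_pos mod_less_divisor[of T k]
  unfolding ends_product_def t_of_def n_of_def by (auto simp: mod_Suc div_Suc)

lemma step_indices_last:
  assumes "Suc k = T*N"
  shows "ends_product k \<and> Suc (n_of k) = N \<and> Suc (t_of k) = T"
proof -
  obtain T' N' where T': "T = Suc T'" and N': "N = Suc N'"
    using T_pos N_pos by (metis gr0_implies_Suc)
  have k: "k = T' + N' * T" using assms unfolding T' N' by (simp add: algebra_simps)
  have "T' < T" "T \<noteq> 0" using T' by simp_all
  then have "k mod T = T'" "k div T = N'" unfolding k by simp_all
  then show ?thesis unfolding ends_product_def t_of_def n_of_def using T' N' by simp
qed

lemma aff_eval_Ft: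
  "t < T \<Longrightarrow> n < N \<Longrightarrow> i < d' \<Longrightarrow>
     aff_eval (Ft t n) w i = (\<Sum>l<d. af_A (Ft t n) i l * w l) + af_b (Ft t n) i"
  using Ft_dims by (simp add: aff_eval_def)

lemma aff_eval_Ft_cong: "t < T \<Longrightarrow> n < N \<Longrightarrow> (\<forall>l<d. w l = w' l) \<Longrightarrow> aff_eval (Ft t n) w = aff_eval (Ft t n) w'"
  using Ft_dims unfolding aff_eval_def by (intro ext) simp

lemma prod_factor_idx_lt_D: "i < d' \<Longrightarrow> prod_idx i < D \<and> factor_idx i < D"
  unfolding prod_idx_def factor_idx_def D_def by simp

lemma mlp_init_eval:
  "mlp_eval mlp_init w oi = (if oi < d then w oi else if oi < d + d' then 0 else if oi < d + 2*d' then 1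
    else if oi < D then aff_eval (Ft 0 0) w (oi - (d + 2*d')) else 0)"
proof -
  have e: "mlp_eval mlp_init w oi = (if oi < D then (\<Sum>l<d. C_init oi l * w l) + b_init oi else 0)"
    unfolding mlp_init_def by (subst prod_mlp_eval) simp_all
  consider "oi < d" | "d \<le> oi" "oi < d + 2*d'" | "d + 2*d' \<le> oi" "oi < D" | "D \<le> oi"
    by (fastforce simp: D_def)
  then show ?thesis
  proof cases
    case 1 then show ?thesis
      unfolding e using sum_indicator_mult[OF 1, of 1 w] by (simp add: C_init_def b_init_def D_def)
  next
    case 3
    then have "oi - (d + 2*d') < d'" by (simp add: D_def)
    then show ?thesis unfolding e using 3 aff_eval_Ft[OF T_pos N_pos]
      by (simp add: C_init_def b_init_def D_def)
  qed (simp_all add: e C_init_def b_init_def D_def)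
qed

lemma C_step_sum:
  assumes "oi < D"
  shows "(\<Sum>l<D. C_step k oi l * w l) = (if oi < d + d' then w oi
     else if d + 2*d' \<le> oi then (\<Sum>l<d. af_A (Ft (t_of (Suc k)) (n_of (Suc k))) (oi - (d + 2*d')) l * w l)
     else 0)"
proof -
  have "(\<Sum>l<D. C_step k oi l * w l) = (\<Sum>l<d + 3*d'. (if l < d then af_A (Ft (t_of (Suc k)) (n_of (Suc k))) (oi - (d + 2*d')) l else 0) * w l)"
    if "d + 2*d' \<le> oi" using that assms by (intro sum.cong) (auto simp: C_step_def D_def)
  then show ?thesis
    using assms sum_indicator_mult[OF assms, of 1 w] sum_lessThan_add_low
    by (auto simp: C_step_def intro!: sum.neutral)
qed

lemma M_step_sum:
  fixes g :: "nat \<Rightarrow> real"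
  shows "(\<Sum>i<d'. M_step k oi i * g i) = (if d \<le> oi \<and> oi < d + d' then (if ends_product k then g (oi - d) else 0)
     else if d + d' \<le> oi \<and> oi < d + 2*d' then (if ends_product k then 0 else g (oi - (d + d'))) else 0)"
proof -
  have "(\<Sum>i<d'. M_step k oi i * g i) = (\<Sum>i<d'. (if i = oi - d \<and> ends_product k then 1 else 0) * g i)"
    if "d \<le> oi" "oi < d + d'" using that by (intro sum.cong) (auto simp: M_step_def)
  moreover have "(\<Sum>i<d'. M_step k oi i * g i) = (\<Sum>i<d'. (if i = oi - (d+d') \<and> \<not> ends_product k then 1 else 0) * g i)"
    if "d + d' \<le> oi" "oi < d + 2*d'" using that by (intro sum.cong) (auto simp: M_step_def)
  ultimately show ?thesis
    using sum_indicator_conj_mult[of "oi - d" d' "ends_product k" g]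
      sum_indicator_conj_mult[of "oi - (d+d')" d' "\<not> ends_product k" g]
    by (auto simp: M_step_def intro!: sum.neutral)
qed

lemma mlp_step_eval:
  assumes k: "Suc k < T*N"
  shows "mlp_eval (mlp_step k) w oi = (if oi < d then w oi
    else if oi < d + d' then w oi + (if ends_product k then relu_prod K u c (w (prod_idx (oi - d))) (w (factor_idx (oi - d))) else 0)
    else if oi < d + 2*d' then (if ends_product k then 1 else relu_prod K u c (w (prod_idx (oi - (d+d')))) (w (factor_idx (oi - (d+d')))))
    else if oi < D then aff_eval (Ft (t_of (Suc k)) (n_of (Suc k))) w (oi - (d + 2*d'))
    else 0)"
proof -
  have e: "mlp_eval (mlp_step k) w oi = (if oi < D then (\<Sum>l<D. C_step k oi l * w l)
      + (\<Sum>i<d'. M_step k oi i * relu_prod K u c (w (prod_idx i)) (w (factor_idx i))) + b_step k oi else 0)"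
    using k by (simp add: mlp_step_def prod_mlp_eval prod_factor_idx_lt_D)
  have next_step: "t_of (Suc k) < T" "n_of (Suc k) < N" using step_indices_bounded[OF k] by auto
  consider "oi < d + 2*d'" | "d + 2*d' \<le> oi" "oi < D" | "D \<le> oi" by linarith
  then show ?thesis
  proof cases
    case 1
    then have "oi < D" by (simp add: D_def)
    then show ?thesis using 1 unfolding e by (simp add: C_step_sum M_step_sum b_step_def)
  next
    case 2
    then have "oi - (d + 2*d') < d'" by (simp add: D_def)
    then show ?thesis
      using 2 unfolding e by (simp add: C_step_sum M_step_sum b_step_def aff_eval_Ft[OF next_step])
  qed (simp add: e D_def)
qed

lemma mlp_last_eval:
  assumes k: "Suc k = T*N"
  shows "mlp_eval (mlp_step k) w oi
     = (if oi < d' then w (d + oi) + relu_prod K u c (w (prod_idx oi)) (w (factor_idx oi)) else 0)"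
proof -
  have e: "mlp_eval (mlp_step k) w oi = (if oi < d' then (\<Sum>l<D. C_last oi l * w l)
      + (\<Sum>i<d'. M_last oi i * relu_prod K u c (w (prod_idx i)) (w (factor_idx i))) else 0)"
    using k by (simp add: mlp_step_def prod_mlp_eval prod_factor_idx_lt_D)
  show ?thesis
  proof (cases "oi < d'")
    case True
    then have "d + oi < D" by (simp add: D_def)
    then show ?thesis
      unfolding e using True sum_indicator_mult[of "d + oi" D 1 w]
        sum_indicator_mult[OF True, of 1 "\<lambda>i. relu_prod K u c (w (prod_idx i)) (w (factor_idx i))"]
      by (simp add: C_last_def M_last_def)
  qed (simp add: e)
qed

lemma length_net: "length net = Suc (T*N)" unfolding net_def by simp

lemma net_nth:
  "net ! 0 = (trivial_attn d, mlp_init)"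
  "k < T*N \<Longrightarrow> net ! Suc k = (attn_step k, mlp_step k)"
  unfolding net_def by simp_all

lemma net_layer_sizes:
  "\<forall>l<length net. a_din (fst (net ! l)) \<le> d + 3 * d' \<and> a_dhead (fst (net ! l)) = 1 \<and>
                          a_k (fst (net ! l)) = 1 \<and> a_H (fst (net ! l)) \<le> d'"
proof (intro allI impI)
  fix l assume l: "l < length net"
  show "a_din (fst (net ! l)) \<le> d + 3 * d' \<and> a_dhead (fst (net ! l)) = 1 \<and>
                          a_k (fst (net ! l)) = 1 \<and> a_H (fst (net ! l)) \<le> d'"
  proof (cases l)
    case 0 then show ?thesis by (simp add: net_nth trivial_attn_def)
  next
    case (Suc k)
    then have k: "k < T*N" using l length_net by simp
    then show ?thesis using Suc step_indices_bounded[OF k] \<theta>t_dims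
      by (simp add: net_nth attn_step_def embed_attn_def D_def)
  qed
qed

lemma dims_compatible_net: "dims_compatible d d' net"
  unfolding dims_compatible_def
proof (intro conjI allI impI)
  show "net \<noteq> []" "a_din (fst (hd net)) = d" unfolding net_def by (simp_all add: trivial_attn_def)
  fix l assume l: "l < length net"
  have TN: "0 < T*N" using T_pos N_pos by simp
  show "mlp_wf (snd (net ! l))" "mlp_in (snd (net ! l)) = a_din (fst (net ! l))"
    "mlp_out (snd (net ! l)) = (if Suc l < length net then a_din (fst (net ! Suc l)) else d')"
    using l TN length_net
    by (cases l; simp add: net_nth mlp_init_def mlp_step_def prod_mlp_wf trivial_attn_def
        attn_step_def embed_attn_def)+
qed

end

section \<open>Error analysis\<close>

lemma abs_prod_le_power: "(\<forall>t<n. \<bar>f t\<bar> \<le> (B::real)) \<Longrightarrow> \<bar>\<Prod>t<n. f t\<bar> \<le> B^n"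
  by (induction n) (auto simp: abs_mult mult_mono' mult.commute)

lemma approx_product_step:
  fixes m :: "real \<Rightarrow> real \<Rightarrow> real"
  assumes B1: "1 \<le> B" and d0: "0 \<le> \<delta>" and t: "t < T" and ds: "\<delta> * real T * B^T \<le> 1"
    and aP: "\<bar>a - P\<bar> \<le> \<delta> * real t * B^t" and P: "\<bar>P\<bar> \<le> B^t" and f: "\<bar>f\<bar> \<le> B"
    and m: "\<forall>a b. \<bar>a\<bar> \<le> B^T + 1 \<longrightarrow> \<bar>b\<bar> \<le> B^T + 1 \<longrightarrow> \<bar>m a b - a*b\<bar> \<le> \<delta>"
  shows "\<bar>m a f - P*f\<bar> \<le> \<delta> * real (Suc t) * B^(Suc t)"
proof -
  have Bt: "B^t \<le> B^T" using B1 t by (intro power_increasing) auto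
  have BT: "B \<le> B^T" using power_increasing[of 1 T B] B1 t by simp
  have "\<delta> * real t * B^t \<le> \<delta> * real T * B^T"
    using Bt d0 B1 t by (intro mult_mono mult_left_mono) auto
  then have "\<bar>a\<bar> \<le> B^T + 1" using P aP ds Bt by linarith
  moreover have "\<bar>f\<bar> \<le> B^T + 1" using f BT by linarith
  ultimately have m1: "\<bar>m a f - a*f\<bar> \<le> \<delta>" using m by blast
  have "\<bar>a*f - P*f\<bar> = \<bar>a - P\<bar> * \<bar>f\<bar>" by (simp add: abs_mult left_diff_distrib[symmetric])
  also have "\<dots> \<le> (\<delta> * real t * B^t) * B" using aP f by (intro mult_mono) auto
  finally have m2: "\<bar>a*f - P*f\<bar> \<le> \<delta> * real t * B^(Suc t)" by (simp add: algebra_simps)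
  have "\<delta> \<le> \<delta> * B^(Suc t)" using d0 one_le_power[OF B1, of "Suc t"] by (simp add: mult_le_cancel_left1)
  then have "\<bar>m a f - P*f\<bar> \<le> \<delta> * B^(Suc t) + \<delta> * real t * B^(Suc t)" using m1 m2 by linarith
  then show ?thesis by (simp add: algebra_simps)
qed

locale product_net_error = product_net +
  fixes \<Omega> :: "vec set" and B \<delta> :: real
  assumes B1: "1 \<le> B"
    and factor_bound: "\<forall>t<T. \<forall>n<N. \<forall>\<mu>\<in>prob_measures_on \<Omega>. \<forall>z\<in>\<Omega>. \<forall>i.
        \<bar>Gamma (\<theta>t t n) (distr \<mu> borel (aff_eval (Ft t n))) (aff_eval (Ft t n) z) i\<bar> \<le> B"
    and relu_prod_accurate: "\<forall>a b. \<bar>a\<bar> \<le> B^T + 1 \<longrightarrow> \<bar>b\<bar> \<le> B^T + 1 \<longrightarrow> \<bar>relu_prod K u c a b - a*b\<bar> \<le> \<delta>"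
    and \<delta>_nonneg: "0 \<le> \<delta>" and \<delta>_small: "\<delta> * real T * B^T \<le> 1"
begin

definition "factor_val \<mu> n t z i = Gamma (\<theta>t t n) (distr \<mu> borel (aff_eval (Ft t n))) (aff_eval (Ft t n) z) i"
definition "prod_err = \<delta> * real T * B^T"

text \<open>The state s of the stream before attention step k, as a function of the input.\<close>
definition "stream_invariant \<mu> k s \<longleftrightarrow> s \<in> borel_measurable borel \<and> (\<forall>z. \<forall>j<d. s z j = z j) \<and>
   (\<forall>z. \<forall>i<d'. s z (factor_idx i) = aff_eval (Ft (t_of k) (n_of k)) z i) \<and>
   (\<forall>z\<in>\<Omega>. \<forall>i<d'. \<bar>s z (d+i) - (\<Sum>n'<n_of k. \<Prod>t<T. factor_val \<mu> n' t z i)\<bar> \<le> real (n_of k) * prod_err \<and>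
                   \<bar>s z (prod_idx i) - (\<Prod>t<t_of k. factor_val \<mu> (n_of k) t z i)\<bar> \<le> \<delta> * real (t_of k) * B^(t_of k))"

lemma attn_step_eval:
  assumes \<mu>: "\<mu> \<in> prob_measures_on \<Omega>" and k: "k < T*N" and I: "stream_invariant \<mu> k s"
  shows "j < d + 2*d' \<Longrightarrow> Gamma (attn_step k) (distr \<mu> borel s) (s z) j = s z j"
    and "i < d' \<Longrightarrow> Gamma (attn_step k) (distr \<mu> borel s) (s z) (factor_idx i) = factor_val \<mu> (n_of k) (t_of k) z i"
proof -
  define \<theta> where "\<theta> = \<theta>t (t_of k) (n_of k)"
  have tn: "t_of k < T" "n_of k < N" using step_indices_bounded[OF k] by auto
  have din: "a_din \<theta> = d'" unfolding \<theta>_def using \<theta>t_dims tn by simp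
  have th: "attn_step k = embed_attn (d + 2*d') ((d + 2*d') + d') \<theta>"
    unfolding attn_step_def \<theta>_def D_def by (simp add: algebra_simps)
  show "j < d + 2*d' \<Longrightarrow> Gamma (attn_step k) (distr \<mu> borel s) (s z) j = s z j"
    unfolding th by (rule Gamma_embed_attn_below[OF _ din])
  assume i: "i < d'"
  have sm: "s \<in> measurable \<mu> borel"
    using I unfolding measurable_cong_sets[OF prob_measures_onD(2)[OF \<mu>] refl] stream_invariant_def by blast
  have ts: "window (d + 2*d') d' \<circ> s = aff_eval (Ft (t_of k) (n_of k))"
  proof (rule ext)+
    fix y j
    show "(window (d + 2*d') d' \<circ> s) y j = aff_eval (Ft (t_of k) (n_of k)) y j"
      using I Ft_dims tn unfolding stream_invariant_def
      by (cases "j < d'") (auto simp: window_def factor_idx_def aff_eval_def)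
  qed
  have "Gamma (attn_step k) (distr \<mu> borel s) (s z) (factor_idx i)
      = Gamma \<theta> (distr (distr \<mu> borel s) borel (window (d + 2*d') d')) (window (d + 2*d') d' (s z)) i"
    unfolding th factor_idx_def by (rule Gamma_embed_attn[OF _ din i]) simp
  also have "distr (distr \<mu> borel s) borel (window (d + 2*d') d') = distr \<mu> borel (aff_eval (Ft (t_of k) (n_of k)))"
    using distr_distr[OF borel_measurable_window sm] ts by simp
  finally show "Gamma (attn_step k) (distr \<mu> borel s) (s z) (factor_idx i) = factor_val \<mu> (n_of k) (t_of k) z i"
    using fun_cong[OF ts, of z] unfolding factor_val_def \<theta>_def by simp
qed

lemma attn_step_product_error:
  assumes \<mu>: "\<mu> \<in> prob_measures_on \<Omega>" and k: "k < T*N" and I: "stream_invariant \<mu> k s"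
    and z: "z \<in> \<Omega>" and i: "i < d'"
  defines "g \<equiv> Gamma (attn_step k) (distr \<mu> borel s) (s z)"
  shows "\<bar>relu_prod K u c (g (prod_idx i)) (g (factor_idx i)) - (\<Prod>t<Suc (t_of k). factor_val \<mu> (n_of k) t z i)\<bar>
            \<le> \<delta> * real (Suc (t_of k)) * B^(Suc (t_of k))"
proof -
  have tn: "t_of k < T" "n_of k < N" using step_indices_bounded[OF k] by auto
  have fb: "\<bar>factor_val \<mu> n t z i\<bar> \<le> B" if "t < T" "n < N" for n t
    using factor_bound that \<mu> z unfolding factor_val_def by blast
  have "g (prod_idx i) = s z (prod_idx i)"
    unfolding g_def using attn_step_eval(1)[OF \<mu> k I, of "prod_idx i"] i by (simp add: prod_idx_def)
  moreover have "g (factor_idx i) = factor_val \<mu> (n_of k) (t_of k) z i"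
    unfolding g_def using attn_step_eval(2)[OF \<mu> k I i] .
  moreover have "\<bar>\<Prod>t<t_of k. factor_val \<mu> (n_of k) t z i\<bar> \<le> B^(t_of k)"
    using fb tn by (intro abs_prod_le_power) auto
  moreover have "\<bar>s z (prod_idx i) - (\<Prod>t<t_of k. factor_val \<mu> (n_of k) t z i)\<bar> \<le> \<delta> * real (t_of k) * B^(t_of k)"
    using I z i unfolding stream_invariant_def by blast
  ultimately show ?thesis
    using approx_product_step[OF B1 \<delta>_nonneg tn(1) \<delta>_small _ _ fb[OF tn] relu_prod_accurate] by simp
qed

lemma step_partial_sum_error:
  assumes "\<bar>S - (\<Sum>n'<n. \<Prod>t<T. f n' t)\<bar> \<le> real n * prod_err"
    and "\<bar>p - (\<Prod>t<T. f n t)\<bar> \<le> prod_err"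
  shows "\<bar>S + p - (\<Sum>n'<Suc n. \<Prod>t<T. f n' t)\<bar> \<le> real (Suc n) * prod_err"
proof -
  have "S + p - (\<Sum>n'<Suc n. \<Prod>t<T. f n' t)
      = (S - (\<Sum>n'<n. \<Prod>t<T. f n' t)) + (p - (\<Prod>t<T. f n t))" by simp
  then show ?thesis using assms by (simp add: algebra_simps)
qed

lemma mlp_step_errors:
  assumes \<mu>: "\<mu> \<in> prob_measures_on \<Omega>" and k: "Suc k < T*N" and I: "stream_invariant \<mu> k s"
    and z: "z \<in> \<Omega>" and i: "i < d'"
  defines "g \<equiv> Gamma (attn_step k) (distr \<mu> borel s) (s z)"
  shows "\<bar>mlp_eval (mlp_step k) g (d + i) - (\<Sum>n'<n_of (Suc k). \<Prod>t<T. factor_val \<mu> n' t z i)\<bar>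
            \<le> real (n_of (Suc k)) * prod_err \<and>
         \<bar>mlp_eval (mlp_step k) g (prod_idx i) - (\<Prod>t<t_of (Suc k). factor_val \<mu> (n_of (Suc k)) t z i)\<bar>
            \<le> \<delta> * real (t_of (Suc k)) * B^(t_of (Suc k))"
proof -
  have k': "k < T*N" using k by simp
  note prod = attn_step_product_error[OF \<mu> k' I z i, folded g_def]
  have "g (d + i) = s z (d + i)" unfolding g_def using attn_step_eval(1)[OF \<mu> k' I] i by simp
  then have eS: "mlp_eval (mlp_step k) g (d + i)
      = s z (d + i) + (if ends_product k then relu_prod K u c (g (prod_idx i)) (g (factor_idx i)) else 0)"
    and eP: "mlp_eval (mlp_step k) g (prod_idx i)
      = (if ends_product k then 1 else relu_prod K u c (g (prod_idx i)) (g (factor_idx i)))"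
    using i by (simp_all add: mlp_step_eval[OF k] prod_idx_def)
  have sum: "\<bar>s z (d+i) - (\<Sum>n'<n_of k. \<Prod>t<T. factor_val \<mu> n' t z i)\<bar> \<le> real (n_of k) * prod_err"
    using I z i unfolding stream_invariant_def by blast
  show ?thesis
  proof (cases "ends_product k")
    case False
    then show ?thesis unfolding eS eP using sum prod step_indices_Suc(1)[OF False] by simp
  next
    case True
    then have "Suc (t_of k) = T" using T_pos unfolding ends_product_def t_of_def by simp
    then show ?thesis
      unfolding eS eP using True step_indices_Suc(2)[OF True]
        step_partial_sum_error[OF sum prod[unfolded \<open>Suc (t_of k) = T\<close>, folded prod_err_def]]
      by simp
  qed
qed

lemma step_preserves_invariant:
  assumes \<mu>: "\<mu> \<in> prob_measures_on \<Omega>" and k: "Suc k < T*N" and I: "stream_invariant \<mu> k s"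
  shows "stream_invariant \<mu> (Suc k) (\<lambda>z. mlp_eval (mlp_step k) (Gamma (attn_step k) (distr \<mu> borel s) (s z)))"
  unfolding stream_invariant_def
proof (intro conjI allI impI ballI)
  define g where "g z = Gamma (attn_step k) (distr \<mu> borel s) (s z)" for z
  have k': "k < T*N" using k by simp
  have input: "g z j = z j" if "j < d" for z j
    using attn_step_eval(1)[OF \<mu> k' I, of j z] I that unfolding g_def stream_invariant_def by auto
  show "(\<lambda>z. mlp_eval (mlp_step k) (Gamma (attn_step k) (distr \<mu> borel s) (s z))) \<in> borel_measurable borel"
    using I prob_measures_onD[OF \<mu>] borel_measurable_layer unfolding stream_invariant_def by blast
  fix z
  show "mlp_eval (mlp_step k) (Gamma (attn_step k) (distr \<mu> borel s) (s z)) j = z j" if "j < d" for j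
    using that input by (simp add: mlp_step_eval[OF k] g_def)
  have "t_of (Suc k) < T" "n_of (Suc k) < N" using step_indices_bounded[OF k] by auto
  note next_factor = aff_eval_Ft_cong[OF this, of "g z" z]
  show "mlp_eval (mlp_step k) (Gamma (attn_step k) (distr \<mu> borel s) (s z)) (factor_idx i)
      = aff_eval (Ft (t_of (Suc k)) (n_of (Suc k))) z i" if "i < d'" for i
    using that input next_factor by (simp add: mlp_step_eval[OF k] factor_idx_def D_def g_def)
next
  fix z i assume "z \<in> \<Omega>" "i < d'"
  from mlp_step_errors[OF \<mu> k I this] show
    "\<bar>mlp_eval (mlp_step k) (Gamma (attn_step k) (distr \<mu> borel s) (s z)) (d + i)
       - (\<Sum>n'<n_of (Suc k). \<Prod>t<T. factor_val \<mu> n' t z i)\<bar> \<le> real (n_of (Suc k)) * prod_err"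
    "\<bar>mlp_eval (mlp_step k) (Gamma (attn_step k) (distr \<mu> borel s) (s z)) (prod_idx i)
       - (\<Prod>t<t_of (Suc k). factor_val \<mu> (n_of (Suc k)) t z i)\<bar> \<le> \<delta> * real (t_of (Suc k)) * B^(t_of (Suc k))"
    by simp_all
qed

lemma last_step_error:
  assumes \<mu>: "\<mu> \<in> prob_measures_on \<Omega>" and k: "Suc k = T*N" and I: "stream_invariant \<mu> k s"
    and z: "z \<in> \<Omega>" and i: "i < d'"
  shows "\<bar>mlp_eval (mlp_step k) (Gamma (attn_step k) (distr \<mu> borel s) (s z)) i
           - (\<Sum>n<N. \<Prod>t<T. factor_val \<mu> n t z i)\<bar> \<le> real N * prod_err"
proof -
  have k': "k < T*N" using k by simp
  note last = step_indices_last[OF k]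
  have "\<bar>s z (d+i) - (\<Sum>n'<n_of k. \<Prod>t<T. factor_val \<mu> n' t z i)\<bar> \<le> real (n_of k) * prod_err"
    using I z i unfolding stream_invariant_def by blast
  from step_partial_sum_error[OF this
      attn_step_product_error[OF \<mu> k' I z i, unfolded conjunct2[OF conjunct2[OF last]], folded prod_err_def]]
  show ?thesis
    using i attn_step_eval(1)[OF \<mu> k' I, of "d + i" z] last by (simp add: mlp_last_eval[OF k])
qed

definition "step_layers k = map (\<lambda>k. (attn_step k, mlp_step k)) [k..<T*N]"

lemma feature_map_steps_error:
  assumes \<mu>: "\<mu> \<in> prob_measures_on \<Omega>"
  shows "Suc k \<le> T*N \<Longrightarrow> stream_invariant \<mu> k s \<Longrightarrow> z \<in> \<Omega> \<Longrightarrow> i < d' \<Longrightarrow>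
    \<bar>feature_map (step_layers k) \<mu> s z i - (\<Sum>n<N. \<Prod>t<T. factor_val \<mu> n t z i)\<bar> \<le> real N * prod_err"
proof (induction "T*N - Suc k" arbitrary: k s)
  case 0
  then have k: "Suc k = T*N" by simp
  then have "step_layers k = [(attn_step k, mlp_step k)]" by (simp add: step_layers_def upt_conv_Cons)
  then show ?case using last_step_error[OF \<mu> k 0(3-5)] by simp
next
  case (Suc m)
  then have k: "Suc k < T*N" by simp
  then have "step_layers k = (attn_step k, mlp_step k) # step_layers (Suc k)"
    by (simp add: step_layers_def upt_conv_Cons)
  then show ?case
    using Suc.hyps(1)[of "Suc k"] Suc.hyps(2) Suc.prems(3,4) k step_preserves_invariant[OF \<mu> k Suc.prems(2)]
    by simp
qed

lemma init_invariant:
  assumes \<mu>: "\<mu> \<in> prob_measures_on \<Omega>"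
  shows "stream_invariant \<mu> 0 (\<lambda>z. mlp_eval mlp_init (Gamma (trivial_attn d) (distr \<mu> borel (\<lambda>x. x)) z))"
  unfolding stream_invariant_def
proof (intro conjI allI impI ballI)
  show "(\<lambda>z. mlp_eval mlp_init (Gamma (trivial_attn d) (distr \<mu> borel (\<lambda>x. x)) z)) \<in> borel_measurable borel"
    using borel_measurable_layer[OF prob_measures_onD(1,2)[OF \<mu>], of "\<lambda>x. x"] by simp
  show "mlp_eval mlp_init (Gamma (trivial_attn d) (distr \<mu> borel (\<lambda>x. x)) z) (factor_idx i)
      = aff_eval (Ft (t_of 0) (n_of 0)) z i" if "i < d'" for z i
  proof -
    have "aff_eval (Ft 0 0) (Gamma (trivial_attn d) (distr \<mu> borel (\<lambda>x. x)) z) = aff_eval (Ft 0 0) z"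
      by (rule aff_eval_Ft_cong[OF T_pos N_pos]) (simp add: Gamma_trivial_attn)
    then show ?thesis using that by (simp add: mlp_init_eval factor_idx_def D_def t_of_def n_of_def)
  qed
qed (simp_all add: mlp_init_eval Gamma_trivial_attn prod_idx_def t_of_def n_of_def)

lemma net_error:
  assumes \<mu>: "\<mu> \<in> prob_measures_on \<Omega>" and z: "z \<in> \<Omega>" and i: "i < d'"
  shows "\<bar>tnet net \<mu> z i - (\<Sum>n<N. \<Prod>t<T. factor_val \<mu> n t z i)\<bar> \<le> real N * prod_err"
proof -
  have "tnet net \<mu> z = feature_map net \<mu> (\<lambda>x. x) z"
    by (rule tnet_eq_feature_map[OF prob_measures_onD(1,2)[OF \<mu>]])
  also have "\<dots> = feature_map (step_layers 0) \<mu>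
      (\<lambda>z. mlp_eval mlp_init (Gamma (trivial_attn d) (distr \<mu> borel (\<lambda>x. x)) z)) z"
    unfolding net_def step_layers_def by simp
  finally show ?thesis
    using feature_map_steps_error[OF \<mu> _ init_invariant[OF \<mu>] z i] T_pos N_pos by simp
qed

end

definition bounded_width_net :: "nat \<Rightarrow> nat \<Rightarrow> (attn_param \<times> affmap list) list \<Rightarrow> bool" where
  "bounded_width_net d d' ps \<longleftrightarrow> dims_compatible d d' ps \<and>
     (\<forall>l<length ps. a_din (fst (ps ! l)) \<le> d + 3 * d' \<and> a_dhead (fst (ps ! l)) = 1 \<and>
                    a_k (fst (ps ! l)) = 1 \<and> a_H (fst (ps ! l)) \<le> d')"

definition const_net :: "nat \<Rightarrow> nat \<Rightarrow> real \<Rightarrow> (attn_param \<times> affmap list) list" where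
  "const_net d d' c0 = [(trivial_attn d, [\<lparr>af_in = d, af_out = d', af_A = \<lambda>_ _. 0, af_b = \<lambda>_. c0\<rparr>])]"

lemma bounded_width_const_net: "bounded_width_net d d' (const_net d d' c0)"
  unfolding bounded_width_net_def dims_compatible_def mlp_wf_def mlp_in_def mlp_out_def const_net_def
  by (simp add: trivial_attn_def)

lemma tnet_const_net: "tnet (const_net d d' c0) \<mu> x i = (if i < d' then c0 else 0)"
  by (simp add: const_net_def ctx_comp_def aff_eval_def)

lemma uniform_factor_bound:
  fixes T N :: nat
  assumes "compact \<Omega>"
  shows "\<exists>B\<ge>1. \<forall>t<T. \<forall>n<N. \<forall>\<mu>\<in>prob_measures_on \<Omega>. \<forall>z\<in>\<Omega>. \<forall>i.
           \<bar>Gamma (\<theta>t t n) (distr \<mu> borel (aff_eval (Ft t n))) (aff_eval (Ft t n) z) i\<bar> \<le> B"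
proof -
  have "\<forall>t n. \<exists>B\<ge>0. \<forall>\<mu>\<in>prob_measures_on \<Omega>. \<forall>z\<in>\<Omega>. \<forall>i.
      \<bar>Gamma (\<theta>t t n) (distr \<mu> borel (aff_eval (Ft t n))) (aff_eval (Ft t n) z) i\<bar> \<le> B"
    using Gamma_aff_bounded[OF assms] by blast
  then obtain Bf where Bf: "\<And>t n. 0 \<le> Bf t n" "\<And>t n. \<forall>\<mu>\<in>prob_measures_on \<Omega>. \<forall>z\<in>\<Omega>. \<forall>i.
      \<bar>Gamma (\<theta>t t n) (distr \<mu> borel (aff_eval (Ft t n))) (aff_eval (Ft t n) z) i\<bar> \<le> Bf t n"
    by metis
  define B where "B = 1 + (\<Sum>t<T. \<Sum>n<N. Bf t n)"
  have "Bf t n \<le> B" if "t < T" "n < N" for t n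
  proof -
    have "Bf t n \<le> (\<Sum>n<N. Bf t n)" using that Bf(1) by (intro member_le_sum) auto
    also have "\<dots> \<le> (\<Sum>t<T. \<Sum>n<N. Bf t n)" using that Bf(1)
      by (intro member_le_sum[where f="\<lambda>t. \<Sum>n<N. Bf t n"]) (auto intro: sum_nonneg)
    finally show ?thesis unfolding B_def by simp
  qed
  moreover have "1 \<le> B" unfolding B_def using Bf(1) by (simp add: sum_nonneg)
  ultimately show ?thesis using Bf(2) by (meson order_trans)
qed

lemma exists_product_accuracy:
  fixes T N :: nat
  assumes "1 \<le> B" "0 < T" "0 < N" "0 < \<eta>"
  shows "\<exists>\<delta>>0. \<delta> * real T * B^T \<le> 1 \<and> real N * (\<delta> * real T * B^T) \<le> \<eta>"
proof -
  define Q where "Q = real N * real T * B^T"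
  have "1 \<le> real N * real T" using assms(2,3)
    by (metis One_nat_def Suc_leI nat_0_less_mult_iff of_nat_1 of_nat_le_iff of_nat_mult)
  moreover have "1 \<le> B^T" by (rule one_le_power[OF assms(1)])
  ultimately have Q1: "1 \<le> Q" unfolding Q_def using mult_mono[of 1 _ 1] by fastforce
  define \<delta> where "\<delta> = min 1 \<eta> / Q"
  have \<delta>0: "0 < \<delta>" and \<delta>Q: "\<delta> * Q = min 1 \<eta>" unfolding \<delta>_def using assms(4) Q1 by simp_all
  have "\<delta> * real T * B^T \<le> \<delta> * Q" unfolding Q_def using \<delta>0 assms
    by (simp add: mult_le_cancel_left1 mult.assoc mult_left_mono)
  also have "\<dots> \<le> 1" using \<delta>Q by simp
  finally show ?thesis using \<delta>0 \<delta>Q unfolding Q_def by (intro exI[of _ \<delta>]) (simp add: algebra_simps)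
qed

lemma exists_product_net:
  fixes T N :: nat
  assumes "0 < T" "0 < N" "compact \<Omega>" "0 < \<eta>"
    and "\<forall>t<T. \<forall>n<N. af_in (Ft t n) = d \<and> af_out (Ft t n) = d'"
    and "\<forall>t<T. \<forall>n<N. a_din (\<theta>t t n) = d' \<and> a_dhead (\<theta>t t n) = 1 \<and> a_k (\<theta>t t n) = 1
                      \<and> a_H (\<theta>t t n) = d'"
  shows "\<exists>ps. bounded_width_net d d' ps \<and> (\<forall>\<mu>\<in>prob_measures_on \<Omega>. \<forall>x\<in>\<Omega>. \<forall>i<d'.
           \<bar>(\<Sum>n<N. \<Prod>t<T. ctx_comp (Gamma (\<theta>t t n)) (\<lambda>\<mu>. aff_eval (Ft t n)) \<mu> x i) - tnet ps \<mu> x i\<bar> \<le> \<eta>)"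
proof -
  obtain B where B: "1 \<le> B" "\<forall>t<T. \<forall>n<N. \<forall>\<mu>\<in>prob_measures_on \<Omega>. \<forall>z\<in>\<Omega>. \<forall>i.
      \<bar>Gamma (\<theta>t t n) (distr \<mu> borel (aff_eval (Ft t n))) (aff_eval (Ft t n) z) i\<bar> \<le> B"
    using uniform_factor_bound[OF assms(3)] by blast
  obtain \<delta> where \<delta>: "0 < \<delta>" "\<delta> * real T * B^T \<le> 1" "real N * (\<delta> * real T * B^T) \<le> \<eta>"
    using exists_product_accuracy[OF B(1) assms(1,2,4)] by blast
  have "0 < B^T + 1" using B(1) by (simp add: add_nonneg_pos)
  then obtain K u c where accurate:
      "\<forall>a b. \<bar>a\<bar> \<le> B^T + 1 \<longrightarrow> \<bar>b\<bar> \<le> B^T + 1 \<longrightarrow> \<bar>relu_prod K u c a b - a*b\<bar> \<le> \<delta>"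
    using relu_prod_approx \<delta>(1) by blast
  interpret product_net_error d d' T N Ft \<theta>t K u c \<Omega> B \<delta>
    using assms B \<delta> accurate by unfold_locales auto
  have "\<bar>(\<Sum>n<N. \<Prod>t<T. ctx_comp (Gamma (\<theta>t t n)) (\<lambda>\<mu>. aff_eval (Ft t n)) \<mu> x i) - tnet net \<mu> x i\<bar> \<le> \<eta>"
    if "\<mu> \<in> prob_measures_on \<Omega>" "x \<in> \<Omega>" "i < d'" for \<mu> x i
    using net_error[OF that] \<delta>(3) unfolding ctx_comp_def factor_val_def prod_err_def
    by (simp add: abs_minus_commute)
  then show ?thesis
    using dims_compatible_net net_layer_sizes unfolding bounded_width_net_def by blast
qed

lemma vnorm_le_sqrt_mult:
  assumes "\<forall>i<n. \<bar>v i\<bar> \<le> c" "0 \<le> c"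
  shows "vnorm n v \<le> sqrt (real n) * c"
proof -
  have "(\<Sum>i<n. (v i)^2) \<le> (\<Sum>i<n. c^2)"
    using assms by (intro sum_mono) (simp add: abs_le_square_iff[symmetric] power2_le_iff_abs_le)
  then have "vnorm n v \<le> sqrt (real n * c^2)" unfolding vnorm_def by simp
  also have "\<dots> = sqrt (real n) * c" using assms(2) by (simp add: real_sqrt_mult)
  finally show ?thesis .
qed

theorem lemma3p5:
  fixes d d' T N :: nat
    and \<Omega> :: "vec set"
    and Ft :: "nat \<Rightarrow> nat \<Rightarrow> affmap"
    and \<theta>t :: "nat \<Rightarrow> nat \<Rightarrow> attn_param"
    and G :: "vec measure \<Rightarrow> vec \<Rightarrow> vec"
    and \<epsilon> :: real
  assumes "compact \<Omega>"
    and "\<forall>x\<in>\<Omega>. \<forall>i\<ge>d. x i = 0"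
    and "\<forall>t<T. \<forall>n<N. af_in (Ft t n) = d \<and> af_out (Ft t n) = d'"
    and "\<forall>t<T. \<forall>n<N. a_din (\<theta>t t n) = d' \<and> a_dhead (\<theta>t t n) = 1 \<and> a_k (\<theta>t t n) = 1
                      \<and> a_H (\<theta>t t n) = d'"
    and "\<forall>\<mu> x. G \<mu> x = (\<lambda>i. if i < d' then
            (\<Sum>n<N. \<Prod>t<T. ctx_comp (Gamma (\<theta>t t n)) (\<lambda>\<mu>. aff_eval (Ft t n)) \<mu> x i) else 0)"
    and "\<epsilon> > 0"
  shows "\<exists>ps :: (attn_param \<times> affmap list) list.
           dims_compatible d d' ps \<and>
           (\<forall>l<length ps. a_din (fst (ps ! l)) \<le> d + 3 * d' \<and> a_dhead (fst (ps ! l)) = 1 \<and>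
                          a_k (fst (ps ! l)) = 1 \<and> a_H (fst (ps ! l)) \<le> d') \<and>
           (\<forall>\<mu>\<in>prob_measures_on \<Omega>. \<forall>x\<in>\<Omega>. vnorm d' (\<lambda>i. G \<mu> x i - tnet ps \<mu> x i) \<le> \<epsilon>)"
proof (cases "T = 0 \<or> N = 0")
  case True
  define c0 where "c0 = (if T = 0 then real N else 0)"
  have "G \<mu> x i = tnet (const_net d d' c0) \<mu> x i" for \<mu> x i
    using assms(5) True unfolding c0_def tnet_const_net by auto
  then show ?thesis
    using bounded_width_const_net[of d d' c0] assms(6) unfolding bounded_width_net_def
    by (intro exI[of _ "const_net d d' c0"]) (simp add: vnorm_def)
next
  case False
  define \<eta> where "\<eta> = \<epsilon> / (sqrt (real d') + 1)"
  have "0 < sqrt (real d') + 1" by (simp add: add_nonneg_pos)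
  then have \<eta>: "0 < \<eta>" "sqrt (real d') * \<eta> \<le> \<epsilon>"
    using assms(6) by (simp_all add: \<eta>_def field_simps)
  obtain ps where ps: "bounded_width_net d d' ps" and err: "\<forall>\<mu>\<in>prob_measures_on \<Omega>. \<forall>x\<in>\<Omega>. \<forall>i<d'.
      \<bar>(\<Sum>n<N. \<Prod>t<T. ctx_comp (Gamma (\<theta>t t n)) (\<lambda>\<mu>. aff_eval (Ft t n)) \<mu> x i) - tnet ps \<mu> x i\<bar> \<le> \<eta>"
    using exists_product_net[OF _ _ assms(1) \<eta>(1) assms(3,4)] False by blast
  have "vnorm d' (\<lambda>i. G \<mu> x i - tnet ps \<mu> x i) \<le> \<epsilon>" if "\<mu> \<in> prob_measures_on \<Omega>" "x \<in> \<Omega>" for \<mu> x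
    using vnorm_le_sqrt_mult[of d' "\<lambda>i. G \<mu> x i - tnet ps \<mu> x i" \<eta>] err that assms(5) \<eta> by simp
  with ps show ?thesis unfolding bounded_width_net_def by blast
qed

end
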